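(* Let $A=\bigoplus_{k\ge0}A_k$ be an affine (finitely generated) graded integral domain over a field $F$ with $A_0=F$. Then for any $F$-subalgebra $R$ of $A$ we have $\mathrm{tr.deg}_F\,\tilde R=\mathrm{tr.deg}_F\,R$.
   Context: For $a\in A$, $\tilde a$ denotes the initial (lowest-degree nonzero homogeneous) component of $a$, with $\tilde 0=0$; $\tilde R$ is the $F$-span of all $\tilde r$, $r\in R$ (a graded subalgebra of $A$). *)

theory Defs
  imports Main "HOL-Library.Extended_Nat"
begin

text \<open>The ambient ring A is the whole type 'a (an integral domain). The base field F
  is the degree-0 part A_0, a subfield of A. A grading is a family Ak :: nat => 'a set.\<close>

definition is_subfield :: "'a::idom set \<Rightarrow> bool" where
  "is_subfield F \<longleftrightarrow> 0 \<in> F \<and> 1 \<in> F \<and>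
     (\<forall>x\<in>F. \<forall>y\<in>F. x + y \<in> F \<and> x * y \<in> F \<and> - x \<in> F) \<and>
     (\<forall>x\<in>F. x \<noteq> 0 \<longrightarrow> (\<exists>y\<in>F. x * y = 1))"

definition is_subalgebra :: "'a::idom set \<Rightarrow> 'a set \<Rightarrow> bool" where
  "is_subalgebra F R \<longleftrightarrow> F \<subseteq> R \<and>
     (\<forall>x\<in>R. \<forall>y\<in>R. x + y \<in> R \<and> x * y \<in> R \<and> - x \<in> R)"

inductive_set gen_alg :: "'a::idom set \<Rightarrow> 'a set \<Rightarrow> 'a set" for F G where
  base_F: "c \<in> F \<Longrightarrow> c \<in> gen_alg F G"
| base_G: "g \<in> G \<Longrightarrow> g \<in> gen_alg F G"
| add: "x \<in> gen_alg F G \<Longrightarrow> y \<in> gen_alg F G \<Longrightarrow> x + y \<in> gen_alg F G"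
| mult: "x \<in> gen_alg F G \<Longrightarrow> y \<in> gen_alg F G \<Longrightarrow> x * y \<in> gen_alg F G"
| neg: "x \<in> gen_alg F G \<Longrightarrow> - x \<in> gen_alg F G"

definition affine_graded_domain :: "(nat \<Rightarrow> 'a::idom set) \<Rightarrow> bool" where
  "affine_graded_domain Ak \<longleftrightarrow>
     is_subfield (Ak 0) \<and>
     (\<forall>k. 0 \<in> Ak k \<and> (\<forall>x\<in>Ak k. \<forall>y\<in>Ak k. x + y \<in> Ak k) \<and>
          (\<forall>c\<in>Ak 0. \<forall>x\<in>Ak k. c * x \<in> Ak k)) \<and>
     (\<forall>i j. \<forall>x\<in>Ak i. \<forall>y\<in>Ak j. x * y \<in> Ak (i + j)) \<and>
     (\<forall>a. \<exists>!c :: nat \<Rightarrow> 'a. (\<forall>k. c k \<in> Ak k) \<and> finite {k. c k \<noteq> 0} \<and>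
            a = (\<Sum>k\<in>{k. c k \<noteq> 0}. c k)) \<and>
     (\<exists>G. finite G \<and> gen_alg (Ak 0) G = UNIV)"

definition hcomp :: "(nat \<Rightarrow> 'a::idom set) \<Rightarrow> 'a \<Rightarrow> nat \<Rightarrow> 'a" where
  "hcomp Ak a = (THE c. (\<forall>k. c k \<in> Ak k) \<and> finite {k. c k \<noteq> 0} \<and>
            a = (\<Sum>k\<in>{k. c k \<noteq> 0}. c k))"

definition initial :: "(nat \<Rightarrow> 'a::idom set) \<Rightarrow> 'a \<Rightarrow> 'a" where
  "initial Ak a = (if a = 0 then 0 else hcomp Ak a (LEAST k. hcomp Ak a k \<noteq> 0))"

definition Fspan :: "'a::idom set \<Rightarrow> 'a set \<Rightarrow> 'a set" where
  "Fspan F S = {x. \<exists>(n::nat) c v. (\<forall>i<n. c i \<in> F \<and> v i \<in> S) \<and> x = (\<Sum>i<n. c i * v i)}"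

text \<open>Algebraic independence over F: for every finite subset T of S, distinct
  monomials in the elements of T are F-linearly independent.\<close>
definition alg_indep :: "'a::idom set \<Rightarrow> 'a set \<Rightarrow> bool" where
  "alg_indep F S \<longleftrightarrow>
     (\<forall>T E c. finite T \<and> T \<subseteq> S \<and> finite E \<and>
        (\<forall>e\<in>E. \<forall>s. s \<notin> T \<longrightarrow> e s = 0) \<and> (\<forall>e\<in>E. c e \<in> F) \<and>
        (\<Sum>e\<in>E. c e * (\<Prod>s\<in>T. s ^ e s)) = 0 \<longrightarrow> (\<forall>e\<in>E. c e = 0))"

definition trdeg :: "'a::idom set \<Rightarrow> 'a set \<Rightarrow> enat" where
  "trdeg F R = Sup {enat (card S) | S. finite S \<and> S \<subseteq> R \<and> alg_indep F S}"

end

theory Submission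
  imports Defs "Jordan_Normal_Form.Char_Poly"
begin

text \<open>Algebraic dependence over a subring satisfies the exchange property, so any two maximal
  independent subsets of a set have the same size. Let \<open>Y\<close> be a maximal independent set of initial
  forms of elements of \<open>R\<close>; then \<open>\<tilde>R\<close> is algebraic over \<open>F[Y]\<close> and its transcendence degree
  is \<open>|Y|\<close>. The key observation is that a relation among elements whose initial forms are
  independent would, in its lowest-degree component, give a relation among those initial forms.
  Hence lifts of \<open>Y\<close> to \<open>R\<close> are independent, and \<open>tr.deg R \<ge> |Y|\<close>. Conversely, extend \<open>Y\<close>
  by homogeneous generators \<open>Z\<close> of \<open>A\<close> to a transcendence basis of \<open>A\<close>: the same argument makes
  \<open>Z\<close> independent over \<open>R\<close>, so every independent \<open>S \<subseteq> R\<close> satisfies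
  \<open>|S| + |Z| \<le> |Y| + |Z|\<close>.\<close>

section \<open>Algebraic elements over a subring\<close>

definition is_subring :: "'a::comm_ring_1 set \<Rightarrow> bool" where
  "is_subring C \<longleftrightarrow> 0 \<in> C \<and> 1 \<in> C \<and> (\<forall>x\<in>C. \<forall>y\<in>C. x + y \<in> C \<and> x * y \<in> C \<and> - x \<in> C)"

lemma subring_zero: "is_subring C \<Longrightarrow> 0 \<in> C"
  and subring_one: "is_subring C \<Longrightarrow> 1 \<in> C"
  and subring_add: "is_subring C \<Longrightarrow> x \<in> C \<Longrightarrow> y \<in> C \<Longrightarrow> x + y \<in> C"
  and subring_mult: "is_subring C \<Longrightarrow> x \<in> C \<Longrightarrow> y \<in> C \<Longrightarrow> x * y \<in> C"
  and subring_uminus: "is_subring C \<Longrightarrow> x \<in> C \<Longrightarrow> - x \<in> C"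
  unfolding is_subring_def by auto

lemma subring_sum: "is_subring C \<Longrightarrow> (\<And>i. i \<in> I \<Longrightarrow> f i \<in> C) \<Longrightarrow> sum f I \<in> C"
  by (induction I rule: infinite_finite_induct) (auto intro: subring_zero subring_add)

lemma subring_prod: "is_subring C \<Longrightarrow> (\<And>i. i \<in> I \<Longrightarrow> f i \<in> C) \<Longrightarrow> prod f I \<in> C"
  by (induction I rule: infinite_finite_induct) (auto intro: subring_one subring_mult)

lemma subring_power: "is_subring C \<Longrightarrow> x \<in> C \<Longrightarrow> x ^ n \<in> C"
  by (induction n) (auto intro: subring_one subring_mult)

lemma det_in_subring:
  assumes C: "is_subring C" and A: "A \<in> carrier_mat n n"
    and entries: "\<And>i j. i < n \<Longrightarrow> j < n \<Longrightarrow> A $$ (i, j) \<in> C"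
  shows "det A \<in> C"
  unfolding det_def'[OF A]
proof (intro subring_sum[OF C] subring_mult[OF C] subring_prod[OF C])
  show "signof p \<in> C" for p
    by (auto simp: sign_def intro: subring_one[OF C] subring_uminus[OF C])
  show "A $$ (i, p i) \<in> C" if "p \<in> {p. p permutes {0..<n}}" "i \<in> {0..<n}" for p i
    using that entries permutes_in_image by fastforce
qed

definition poly_over :: "'a::comm_ring_1 set \<Rightarrow> 'a poly \<Rightarrow> bool" where
  "poly_over C p \<longleftrightarrow> (\<forall>i. coeff p i \<in> C)"

lemma poly_over_0 [simp]: "poly_over C 0 \<longleftrightarrow> 0 \<in> C"
  unfolding poly_over_def by simp

lemma poly_over_pCons [simp]: "poly_over C (pCons a p) \<longleftrightarrow> a \<in> C \<and> poly_over C p"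
  unfolding poly_over_def by (metis coeff_pCons_0 coeff_pCons_Suc not0_implies_Suc)

lemma is_subring_poly_over:
  assumes C: "is_subring C"
  shows "is_subring {p. poly_over C p}"
proof -
  have "poly_over C 0" "poly_over C 1"
    using C unfolding poly_over_def by (auto simp: coeff_1 intro: subring_zero subring_one)
  moreover have "poly_over C (p + q)" "poly_over C (p * q)" "poly_over C (- p)"
    if "poly_over C p" "poly_over C q" for p q
    using that unfolding poly_over_def coeff_mult
    by (auto intro!: subring_sum[OF C] subring_add[OF C] subring_mult[OF C] subring_uminus[OF C])
  ultimately show ?thesis unfolding is_subring_def by auto
qed

lemma subring_poly: "is_subring C \<Longrightarrow> poly_over C p \<Longrightarrow> x \<in> C \<Longrightarrow> poly p x \<in> C"
  by (induction p) (auto intro: subring_add subring_mult)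

lemma poly_over_pcompose_linear:
  "is_subring C \<Longrightarrow> poly_over C p \<Longrightarrow> d \<in> C \<Longrightarrow> poly_over C (pcompose p [:0, d:])"
  unfolding poly_over_def coeff_pcompose_linear by (auto intro: subring_mult subring_power)

definition algebraic_over :: "'a::comm_ring_1 set \<Rightarrow> 'a \<Rightarrow> bool" where
  "algebraic_over C x \<longleftrightarrow> (\<exists>p. p \<noteq> 0 \<and> poly_over C p \<and> poly p x = 0)"

lemma algebraic_over_mono: "C \<subseteq> D \<Longrightarrow> algebraic_over C x \<Longrightarrow> algebraic_over D x"
  unfolding algebraic_over_def poly_over_def by blast

lemma algebraic_over_mem:
  assumes "is_subring C" "b \<in> C"
  shows "algebraic_over C b"
  unfolding algebraic_over_def
  by (rule exI[of _ "[:- b, 1:]"]) (use assms in \<open>auto intro: subring_uminus subring_one subring_zero\<close>)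

lemma algebraic_over_cancel_factor:
  fixes x :: "'a::idom"
  assumes B: "is_subring B" and m: "m \<in> B" "m \<noteq> 0" and mx: "algebraic_over B (m * x)"
  shows "algebraic_over B x"
proof -
  obtain p where p: "p \<noteq> 0" "poly_over B p" "poly p (m * x) = 0"
    using mx unfolding algebraic_over_def by blast
  define q where "q = pcompose p [:0, m:]"
  have "coeff q (degree p) = m ^ degree p * lead_coeff p"
    unfolding q_def coeff_pcompose_linear ..
  then have "q \<noteq> 0" using p(1) m(2) by auto
  moreover have "poly q x = 0" unfolding q_def poly_pcompose using p(3) by (simp add: mult.commute)
  moreover have "poly_over B q" unfolding q_def by (rule poly_over_pcompose_linear[OF B p(2) m(1)])
  ultimately show ?thesis unfolding algebraic_over_def by blast
qed

lemma poly_char_poly_eigenvalue: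
  fixes A :: "'a::idom mat"
  assumes A: "A \<in> carrier_mat n n" and ev: "eigenvector A v k"
  shows "poly (char_poly A) k = 0"
proof -
  define N where "N = mat n n (\<lambda>(i, j). (if i = j then k else 0) - A $$ (i, j))"
  have N: "N \<in> carrier_mat n n" unfolding N_def by simp
  have v: "v \<in> carrier_vec n" "v \<noteq> 0\<^sub>v n" "A *\<^sub>v v = k \<cdot>\<^sub>v v"
    using ev A unfolding eigenvector_def by auto
  have "poly (char_poly A) k = det N"
    unfolding char_poly_def
    by (rule poly_det_cong[OF N char_poly_matrix_closed[OF A]])
      (use A in \<open>simp add: N_def char_poly_matrix_def\<close>)
  moreover have "N *\<^sub>v v = 0\<^sub>v n"
  proof (rule eq_vecI)
    fix i assume "i < dim_vec (0\<^sub>v n :: 'a vec)"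
    then have i: "i < n" by simp
    have "(\<Sum>j<n. (if i = j then k else 0) * v $ j) = (\<Sum>j<n. if i = j then k * v $ j else 0)"
      by (rule sum.cong) auto
    also have "\<dots> = k * v $ i" using i by simp
    finally have "(\<Sum>j<n. (if i = j then k else 0) * v $ j) = (A *\<^sub>v v) $ i"
      using i v by simp
    moreover have "(N *\<^sub>v v) $ i
        = (\<Sum>j<n. (if i = j then k else 0) * v $ j) - (\<Sum>j<n. A $$ (i, j) * v $ j)"
      using i v(1) unfolding N_def
      by (simp add: scalar_prod_def atLeast0LessThan left_diff_distrib sum_subtractf)
    moreover have "(A *\<^sub>v v) $ i = (\<Sum>j<n. A $$ (i, j) * v $ j)"
      using i v(1) A by (simp add: scalar_prod_def atLeast0LessThan)
    ultimately show "(N *\<^sub>v v) $ i = 0\<^sub>v n $ i" using i by simp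
  qed (use N in simp)
  ultimately show ?thesis using det_0_iff_vec_prod_zero[OF N] v by auto
qed

text \<open>The determinant trick: the characteristic polynomial is monic with coefficients in \<open>B\<close>.\<close>

lemma algebraic_over_eigenvalue:
  fixes M :: "'a::idom mat"
  assumes B: "is_subring B" and M: "M \<in> carrier_mat n n"
    and entries: "\<And>i j. i < n \<Longrightarrow> j < n \<Longrightarrow> M $$ (i, j) \<in> B"
    and ev: "eigenvector M v k"
  shows "algebraic_over B k"
proof -
  have "char_poly M \<in> {p. poly_over B p}"
    unfolding char_poly_def
  proof (rule det_in_subring[OF is_subring_poly_over[OF B] char_poly_matrix_closed[OF M]])
    fix i j assume "i < n" "j < n"
    then show "char_poly_matrix M $$ (i, j) \<in> {p. poly_over B p}"
      using M entries[of i j] B subring_one[OF is_subring_poly_over[OF B]]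
      unfolding char_poly_matrix_def by (auto intro: subring_zero subring_one subring_uminus)
  qed
  moreover have "char_poly M \<noteq> 0"
    using degree_monic_char_poly[OF M] by auto
  ultimately show ?thesis
    unfolding algebraic_over_def using poly_char_poly_eigenvalue[OF M ev] by blast
qed

inductive_set span_over :: "'a::comm_ring_1 set \<Rightarrow> 'a set \<Rightarrow> 'a set" for B V where
  zero: "0 \<in> span_over B V"
| scaled: "v \<in> V \<Longrightarrow> b \<in> B \<Longrightarrow> b * v \<in> span_over B V"
| add: "x \<in> span_over B V \<Longrightarrow> y \<in> span_over B V \<Longrightarrow> x + y \<in> span_over B V"

lemma span_over_mem: "is_subring B \<Longrightarrow> v \<in> V \<Longrightarrow> v \<in> span_over B V"
  using span_over.scaled[of v V 1 B] subring_one by auto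

lemma span_over_mult_left:
  assumes B: "is_subring B" and b: "b \<in> B" and x: "x \<in> span_over B V"
  shows "b * x \<in> span_over B V"
  using x
proof induction
  case (scaled v c)
  then show ?case using span_over.scaled[of v V "b * c" B] subring_mult[OF B b]
    by (simp add: mult.assoc)
qed (simp_all add: distrib_left span_over.intros)

lemma span_over_sum: "(\<And>i. i \<in> I \<Longrightarrow> f i \<in> span_over B V) \<Longrightarrow> sum f I \<in> span_over B V"
  by (induction I rule: infinite_finite_induct) (auto intro: span_over.intros)

lemma span_over_mult:
  assumes B: "is_subring B" and prods: "\<And>v w. v \<in> V \<Longrightarrow> w \<in> W \<Longrightarrow> v * w \<in> span_over B U"
    and x: "x \<in> span_over B V" and y: "y \<in> span_over B W"
  shows "x * y \<in> span_over B U"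
  using x
proof induction
  case (scaled v b)
  have "v * y \<in> span_over B U" using y
  proof induction
    case (scaled w c)
    then show ?case using span_over_mult_left[OF B scaled(2) prods[OF \<open>v \<in> V\<close> scaled(1)]]
      by (simp add: mult.left_commute)
  qed (simp_all add: distrib_left span_over.intros)
  then show ?case using span_over_mult_left[OF B scaled(2)] by (simp add: mult.assoc)
qed (simp_all add: distrib_right span_over.intros)

lemma span_over_finite_repr:
  assumes "finite V" "is_subring B" "x \<in> span_over B V"
  obtains g where "\<And>w. g w \<in> B" "x = (\<Sum>w\<in>V. g w * w)"
proof -
  have "\<exists>g. (\<forall>w. g w \<in> B) \<and> x = (\<Sum>w\<in>V. g w * w)"
    using assms(3)
  proof induction
    case zero
    then show ?case using subring_zero[OF assms(2)] by (intro exI[of _ "\<lambda>_. 0"]) auto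
  next
    case (scaled v b)
    have "(\<Sum>w\<in>V. (if w = v then b else 0) * w) = b * v"
      using scaled(1) assms(1) by (simp add: if_distrib[of "\<lambda>a. a * _"] cong: if_cong)
    then show ?case using scaled(2) subring_zero[OF assms(2)]
      by (intro exI[of _ "\<lambda>w. if w = v then b else 0"]) auto
  next
    case (add x y)
    then obtain g1 g2 where "\<forall>w. g1 w \<in> B" "x = (\<Sum>w\<in>V. g1 w * w)"
      "\<forall>w. g2 w \<in> B" "y = (\<Sum>w\<in>V. g2 w * w)"
      by blast
    then show ?case using subring_add[OF assms(2)]
      by (intro exI[of _ "\<lambda>w. g1 w + g2 w"]) (auto simp: sum.distrib distrib_right)
  qed
  then show ?thesis using that by blast
qed

text \<open>\<open>y\<close> is an eigenvalue of the matrix over \<open>B\<close> describing multiplication by \<open>y\<close> on \<open>V\<close>.\<close>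

lemma algebraic_over_if_span_stable:
  fixes y :: "'a::idom"
  assumes B: "is_subring B" and V: "finite V" "w0 \<in> V" "w0 \<noteq> 0"
    and stable: "\<And>w. w \<in> V \<Longrightarrow> y * w \<in> span_over B V"
  shows "algebraic_over B y"
proof -
  define n where "n = card V"
  obtain h where h: "bij_betw h {0..<n} V"
    using ex_bij_betw_nat_finite[OF V(1)] unfolding n_def by blast
  have hV: "h i \<in> V" if "i < n" for i using h that unfolding bij_betw_def by auto
  have "\<exists>g. (\<forall>w. g w \<in> B) \<and> y * h i = (\<Sum>w\<in>V. g w * w)" if "i < n" for i
    using span_over_finite_repr[OF V(1) B stable[OF hV[OF that]]] by metis
  then obtain G where G: "\<And>i w. i < n \<Longrightarrow> G i w \<in> B"
    and Gy: "\<And>i. i < n \<Longrightarrow> y * h i = (\<Sum>w\<in>V. G i w * w)"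
    by metis
  define M where "M = mat n n (\<lambda>(i, j). G i (h j))"
  have M: "M \<in> carrier_mat n n" unfolding M_def by simp
  obtain i0 where i0: "i0 < n" "h i0 = w0"
    using h V(2) unfolding bij_betw_def by (metis atLeastLessThan_iff imageE)
  have ev: "eigenvector M (vec n h) y"
    unfolding eigenvector_def
  proof (intro conjI)
    show "vec n h \<noteq> 0\<^sub>v (dim_row M)"
      using i0 V(3) M by (metis carrier_matD(1) index_vec index_zero_vec(1))
    show "M *\<^sub>v vec n h = y \<cdot>\<^sub>v vec n h"
    proof (rule eq_vecI)
      fix i assume "i < dim_vec (y \<cdot>\<^sub>v vec n h)"
      then have i: "i < n" by simp
      have "(\<Sum>w\<in>V. G i w * w) = (\<Sum>j<n. G i (h j) * h j)"
        using sum.reindex_bij_betw[OF h, of "\<lambda>w. G i w * w"] by (simp add: atLeast0LessThan)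
      then show "(M *\<^sub>v vec n h) $ i = (y \<cdot>\<^sub>v vec n h) $ i"
        using i Gy[OF i] unfolding M_def by (simp add: scalar_prod_def atLeast0LessThan)
    qed (simp add: M_def)
  qed (simp add: M_def)
  show ?thesis
    by (rule algebraic_over_eigenvalue[OF B M _ ev]) (simp add: M_def G)
qed

definition integral_rel :: "'a::comm_ring_1 set \<Rightarrow> 'a \<Rightarrow> nat \<Rightarrow> (nat \<Rightarrow> 'a) \<Rightarrow> bool" where
  "integral_rel B x s \<beta> \<longleftrightarrow> 1 \<le> s \<and> (\<forall>i. \<beta> i \<in> B) \<and> x ^ s = (\<Sum>i<s. \<beta> i * x ^ i)"

lemma integral_rel_power_in_span:
  assumes B: "is_subring B" and rel: "integral_rel B x s \<beta>"
  shows "x ^ n \<in> span_over B {x ^ i | i. i < s}"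
proof (induction n rule: less_induct)
  case (less n)
  show ?case
  proof (cases "n < s")
    case True
    then show ?thesis by (intro span_over_mem[OF B]) blast
  next
    case False
    then have "x ^ n = x ^ (n - s) * x ^ s" by (simp flip: power_add)
    also have "\<dots> = (\<Sum>i<s. \<beta> i * x ^ (n - s + i))"
      using rel unfolding integral_rel_def by (simp add: sum_distrib_left power_add mult_ac)
    also have "\<dots> \<in> span_over B {x ^ i | i. i < s}"
      using rel False unfolding integral_rel_def
      by (intro span_over_sum span_over_mult_left[OF B] less) auto
    finally show ?thesis .
  qed
qed

lemma algebraic_imp_integral_rel:
  fixes x :: "'a::idom"
  assumes B: "is_subring B" and x: "algebraic_over B x"
  obtains c s \<beta> where "c \<in> B" "c \<noteq> 0" "integral_rel B (c * x) s \<beta>"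
proof -
  obtain p where p: "p \<noteq> 0" "poly_over B p" "poly p x = 0"
    using x unfolding algebraic_over_def by blast
  define s where "s = degree p"
  define c where "c = coeff p s"
  have c: "c \<noteq> 0" "c \<in> B" using p(1,2) unfolding c_def s_def poly_over_def by auto
  have "s \<noteq> 0"
  proof
    assume "s = 0"
    then have "poly p x = c" unfolding c_def s_def by (simp add: poly_altdef)
    then show False using p(3) c by simp
  qed
  then obtain s' where s': "s = Suc s'" by (cases s) auto
  txt \<open>Multiplying \<open>p(x) = 0\<close> by \<open>c\<^bsup>s-1\<^esup>\<close> gives a monic relation for \<open>c x\<close>.\<close>
  define \<beta> where "\<beta> i = - coeff p i * c ^ (s' - i)" for i
  have "0 = c ^ s' * poly p x" using p(3) by simp
  also have "\<dots> = (\<Sum>i\<le>s. c ^ s' * coeff p i * x ^ i)"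
    unfolding poly_altdef s_def[symmetric] by (simp add: sum_distrib_left mult.assoc)
  also have "\<dots> = (\<Sum>i<s. c ^ s' * coeff p i * x ^ i) + (c * x) ^ s"
    unfolding s' by (simp add: lessThan_Suc_atMost[symmetric] c_def s' power_mult_distrib mult_ac)
  also have "(\<Sum>i<s. c ^ s' * coeff p i * x ^ i) = (\<Sum>i<s. coeff p i * c ^ (s' - i) * (c * x) ^ i)"
  proof (rule sum.cong)
    fix i assume "i \<in> {..<s}"
    then have "c ^ s' = c ^ (s' - i) * c ^ i" using s' by (simp flip: power_add)
    then show "c ^ s' * coeff p i * x ^ i = coeff p i * c ^ (s' - i) * (c * x) ^ i"
      by (simp add: power_mult_distrib mult_ac)
  qed simp
  finally have "(c * x) ^ s = (\<Sum>i<s. \<beta> i * (c * x) ^ i)"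
    unfolding \<beta>_def by (simp add: sum_negf eq_neg_iff_add_eq_0 add.commute)
  moreover have "\<beta> i \<in> B" for i
    using p(2) c(2) unfolding \<beta>_def poly_over_def
    by (auto intro: subring_mult[OF B] subring_uminus[OF B] subring_power[OF B])
  ultimately have "integral_rel B (c * x) s \<beta>" using s' unfolding integral_rel_def by simp
  then show ?thesis using that c by blast
qed

lemma integral_rel_products_in_span:
  assumes B: "is_subring B" and rel: "integral_rel B \<xi> s \<beta>" "integral_rel B \<eta> t \<gamma>"
  shows "\<xi> ^ i * \<eta> ^ j \<in> span_over B ((\<lambda>(i, j). \<xi> ^ i * \<eta> ^ j) ` ({..<s} \<times> {..<t}))"
  by (rule span_over_mult[OF B _ integral_rel_power_in_span[OF B rel(1)]
        integral_rel_power_in_span[OF B rel(2)]])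
    (force intro: span_over_mem[OF B])

lemma
  fixes x y :: "'a::idom"
  assumes B: "is_subring B" and x: "algebraic_over B x" and y: "algebraic_over B y"
  shows algebraic_over_add: "algebraic_over B (x + y)"
    and algebraic_over_mult: "algebraic_over B (x * y)"
proof -
  obtain c s \<beta> where c: "c \<in> B" "c \<noteq> 0" and \<xi>: "integral_rel B (c * x) s \<beta>"
    using algebraic_imp_integral_rel[OF B x] by blast
  obtain e t \<gamma> where e: "e \<in> B" "e \<noteq> 0" and \<eta>: "integral_rel B (e * y) t \<gamma>"
    using algebraic_imp_integral_rel[OF B y] by blast
  define V where "V = (\<lambda>(i, j). (c * x) ^ i * (e * y) ^ j) ` ({..<s} \<times> {..<t})"
  note span = integral_rel_products_in_span[OF B \<xi> \<eta>, folded V_def]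
  have V: "finite V" "1 \<in> V"
    using \<xi> \<eta> unfolding V_def integral_rel_def by (force intro: image_eqI[of _ _ "(0, 0)"])+
  have ce: "c * e \<in> B" "c * e \<noteq> 0" using c e subring_mult[OF B] by auto
  have "algebraic_over B (c * e * (x + y))"
  proof (rule algebraic_over_if_span_stable[OF B V one_neq_zero])
    fix w assume "w \<in> V"
    then obtain i j where w: "w = (c * x) ^ i * (e * y) ^ j" unfolding V_def by auto
    have eq: "c * e * (x + y) * w
        = e * ((c * x) ^ Suc i * (e * y) ^ j) + c * ((c * x) ^ i * (e * y) ^ Suc j)"
      unfolding w by (simp add: algebra_simps)
    show "c * e * (x + y) * w \<in> span_over B V"
      unfolding eq by (intro span_over.add span_over_mult_left[OF B] span c e)
  qed
  then show "algebraic_over B (x + y)"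
    using algebraic_over_cancel_factor[OF B ce] by blast
  have "algebraic_over B (c * e * (x * y))"
  proof (rule algebraic_over_if_span_stable[OF B V one_neq_zero])
    fix w assume "w \<in> V"
    then obtain i j where w: "w = (c * x) ^ i * (e * y) ^ j" unfolding V_def by auto
    have eq: "c * e * (x * y) * w = (c * x) ^ Suc i * (e * y) ^ Suc j"
      unfolding w by (simp add: algebra_simps)
    show "c * e * (x * y) * w \<in> span_over B V"
      unfolding eq by (rule span)
  qed
  then show "algebraic_over B (x * y)"
    using algebraic_over_cancel_factor[OF B ce] by blast
qed

lemma is_subring_algebraic_over:
  fixes B :: "'a::idom set"
  assumes B: "is_subring B"
  shows "is_subring {x. algebraic_over B x}"
proof -
  have "algebraic_over B (- x)" if "algebraic_over B x" for x
    using algebraic_over_mult[OF B that algebraic_over_mem[OF B subring_uminus[OF B subring_one[OF B]]]]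
    by simp
  then show ?thesis
    unfolding is_subring_def
    using algebraic_over_add[OF B] algebraic_over_mult[OF B] algebraic_over_mem[OF B]
      subring_zero[OF B] subring_one[OF B]
    by auto
qed

lemma algebraic_over_cofactor:
  fixes e :: "'a::idom"
  assumes B: "is_subring B" and e: "algebraic_over B e" "e \<noteq> 0"
  obtains e' m where "algebraic_over B e'" "m \<in> B" "m \<noteq> 0" "e * e' = m"
proof -
  have "\<exists>e' m. algebraic_over B e' \<and> m \<in> B \<and> m \<noteq> 0 \<and> e * e' = m"
    if "p \<noteq> 0" "poly_over B p" "poly p e = 0" for p
    using that
  proof (induction p)
    case (pCons a q)
    have a: "a \<in> B" and q: "poly_over B q" using pCons(4) by simp_all
    have eq: "a + e * poly q e = 0" using pCons(5) by simp
    show ?case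
    proof (cases "a = 0")
      case False
      have "algebraic_over B (poly q e)"
        using subring_poly[OF is_subring_algebraic_over[OF B]] algebraic_over_mem[OF B] q e(1)
        unfolding poly_over_def by blast
      moreover have "e * poly q e = - a" using eq by (simp add: eq_neg_iff_add_eq_0 add.commute)
      ultimately show ?thesis using False subring_uminus[OF B a] by fastforce
    next
      case True
      then show ?thesis using pCons eq e(2) by simp
    qed
  qed simp
  then show ?thesis using e(1) that unfolding algebraic_over_def by blast
qed

lemma algebraic_over_if_integral_rel:
  fixes x :: "'a::idom"
  assumes B: "is_subring B" and rel: "integral_rel B x s \<beta>"
  shows "algebraic_over B x"
proof (rule algebraic_over_if_span_stable[OF B, of "{x ^ i | i. i < s}" 1])
  show "finite {x ^ i | i. i < s}" by (simp add: finite_image_set)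
  show "1 \<in> {x ^ i | i. i < s}" using rel unfolding integral_rel_def by (auto intro!: exI[of _ 0])
  show "x * w \<in> span_over B {x ^ i | i. i < s}" if "w \<in> {x ^ i | i. i < s}" for w
    using that integral_rel_power_in_span[OF B rel] by (auto simp flip: power_Suc)
qed simp

lemma is_subring_gen_alg: "1 \<in> C \<Longrightarrow> is_subring (gen_alg C G)"
  unfolding is_subring_def
  by (metis gen_alg.intros add.right_inverse)

lemma gen_alg_least:
  assumes "is_subring D" "C \<subseteq> D" "G \<subseteq> D"
  shows "gen_alg C G \<subseteq> D"
proof
  fix x assume "x \<in> gen_alg C G"
  then show "x \<in> D"
    by induction (use assms in \<open>auto intro: subring_add subring_mult subring_uminus\<close>)
qed

lemma gen_alg_singleton_poly:
  assumes B: "is_subring B" and x: "x \<in> gen_alg B {a}"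
  obtains q where "poly_over B q" "x = poly q a"
proof -
  note P = is_subring_poly_over[OF B]
  have "\<exists>q. poly_over B q \<and> x = poly q a"
    using x
  proof induction
    case (base_F c)
    then show ?case using subring_zero[OF B] by (intro exI[of _ "[:c:]"]) simp
  next
    case (base_G g)
    then show ?case using subring_zero[OF B] subring_one[OF B] by (intro exI[of _ "[:0, 1:]"]) simp
  next
    case (add x y)
    then show ?case using subring_add[OF P] by (metis mem_Collect_eq poly_add)
  next
    case (mult x y)
    then show ?case using subring_mult[OF P] by (metis mem_Collect_eq poly_mult)
  next
    case (neg x)
    then show ?case using subring_uminus[OF P] by (metis mem_Collect_eq poly_minus)
  qed
  then show ?thesis using that by blast
qed

lemma gen_alg_algebraic_over:
  fixes B :: "'a::idom set"
  assumes B: "is_subring B" and K: "\<And>a. a \<in> K \<Longrightarrow> algebraic_over B a"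
  shows "gen_alg B K \<subseteq> {x. algebraic_over B x}"
  by (rule gen_alg_least[OF is_subring_algebraic_over[OF B]]) (use algebraic_over_mem[OF B] K in auto)

lemma is_subring_span_powers:
  assumes B: "is_subring B" and rel: "integral_rel B \<alpha> t \<gamma>"
  shows "is_subring (span_over B {\<alpha> ^ j | j. j < t})"
proof -
  let ?A = "span_over B {\<alpha> ^ j | j. j < t}"
  have pow: "\<alpha> ^ n \<in> ?A" for n by (rule integral_rel_power_in_span[OF B rel])
  have mult: "x * y \<in> ?A" if "x \<in> ?A" "y \<in> ?A" for x y
    by (rule span_over_mult[OF B _ that]) (auto simp flip: power_add intro: pow)
  have "- x \<in> ?A" if "x \<in> ?A" for x
    using span_over_mult_left[OF B subring_uminus[OF B subring_one[OF B]] that] by simp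
  then show ?thesis unfolding is_subring_def using pow[of 0] mult by (auto intro: span_over.intros)
qed

lemma gen_alg_subset_span_powers:
  assumes B: "is_subring B" and rel: "integral_rel B \<alpha> t \<gamma>"
  shows "gen_alg B {\<alpha>} \<subseteq> span_over B {\<alpha> ^ j | j. j < t}"
  by (rule gen_alg_least[OF is_subring_span_powers[OF B rel]])
    (use span_over_mult_left[OF B _ integral_rel_power_in_span[OF B rel, of 0]]
      integral_rel_power_in_span[OF B rel, of 1] in auto)

text \<open>The products \<open>\<alpha>\<^sup>j \<xi>\<^sup>i\<close> with \<open>j < t\<close>, \<open>i < s\<close> span a \<open>B\<close>-module stable under
  multiplication by \<open>\<xi>\<close>.\<close>

lemma algebraic_over_integral_tower:
  fixes \<alpha> \<xi> :: "'a::idom"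
  assumes B: "is_subring B" and \<alpha>: "integral_rel B \<alpha> t \<gamma>"
    and \<xi>: "integral_rel (gen_alg B {\<alpha>}) \<xi> s \<beta>"
  shows "algebraic_over B \<xi>"
proof -
  let ?A = "span_over B {\<alpha> ^ j | j. j < t}"
  have A: "is_subring ?A" by (rule is_subring_span_powers[OF B \<alpha>])
  have \<beta>: "\<beta> i \<in> ?A" for i
    using \<xi> gen_alg_subset_span_powers[OF B \<alpha>] unfolding integral_rel_def by blast
  define V where "V = (\<lambda>(j, i). \<alpha> ^ j * \<xi> ^ i) ` ({..<t} \<times> {..<s})"
  have V: "finite V" "1 \<in> V"
    using \<alpha> \<xi> unfolding V_def integral_rel_def by (force intro: image_eqI[of _ _ "(0, 0)"])+
  have AV: "u * \<xi> ^ i \<in> span_over B V" if "u \<in> ?A" "i < s" for u i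
    by (rule span_over_mult[OF B _ that(1) span_over_mem[OF B, of "\<xi> ^ i" "{\<xi> ^ i}"]])
      (use that(2) in \<open>force simp: V_def intro: span_over_mem[OF B]\<close>)+
  show ?thesis
  proof (rule algebraic_over_if_span_stable[OF B V one_neq_zero])
    fix w assume "w \<in> V"
    then obtain j i where w: "w = \<alpha> ^ j * \<xi> ^ i" "j < t" "i < s" unfolding V_def by auto
    show "\<xi> * w \<in> span_over B V"
    proof (cases "Suc i < s")
      case True
      have "\<xi> * w = \<alpha> ^ j * \<xi> ^ Suc i" using w(1) by (simp add: mult_ac)
      also have "\<dots> \<in> V" unfolding V_def using True w(2) by force
      finally show ?thesis by (rule span_over_mem[OF B])
    next
      case False
      with w have "s = Suc i" by simp
      with w have "\<xi> * w = \<alpha> ^ j * \<xi> ^ s" by (simp add: mult_ac)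
      also have "\<dots> = (\<Sum>i'<s. (\<beta> i' * \<alpha> ^ j) * \<xi> ^ i')"
        using \<xi> unfolding integral_rel_def by (simp add: sum_distrib_left mult_ac)
      also have "\<dots> \<in> span_over B V"
        by (intro span_over_sum AV subring_mult[OF A] \<beta> integral_rel_power_in_span[OF B \<alpha>]) auto
      finally show ?thesis .
    qed
  qed
qed

lemma algebraic_over_gen_alg_integral:
  fixes x \<alpha> :: "'a::idom"
  assumes B: "is_subring B" and \<alpha>: "integral_rel B \<alpha> t \<gamma>"
    and x: "algebraic_over (gen_alg B {\<alpha>}) x"
  shows "algebraic_over B x"
proof -
  have B': "is_subring (gen_alg B {\<alpha>})" by (rule is_subring_gen_alg[OF subring_one[OF B]])
  obtain e s \<beta> where e: "e \<in> gen_alg B {\<alpha>}" "e \<noteq> 0"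
    and \<xi>: "integral_rel (gen_alg B {\<alpha>}) (e * x) s \<beta>"
    using algebraic_imp_integral_rel[OF B' x] by blast
  have "e \<in> {y. algebraic_over B y}"
    using gen_alg_algebraic_over[OF B, of "{\<alpha>}"] algebraic_over_if_integral_rel[OF B \<alpha>] e(1)
    by blast
  then obtain e' m where em: "algebraic_over B e'" "m \<in> B" "m \<noteq> 0" "e * e' = m"
    using algebraic_over_cofactor[OF B _ e(2)] by blast
  have mx: "m * x = e' * (e * x)" unfolding em(4)[symmetric] by (simp add: mult_ac)
  have "algebraic_over B (m * x)"
    unfolding mx by (rule algebraic_over_mult[OF B em(1) algebraic_over_integral_tower[OF B \<alpha> \<xi>]])
  then show ?thesis by (rule algebraic_over_cancel_factor[OF B em(2,3)])
qed

lemma gen_alg_rescale: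
  assumes B: "is_subring B" and c: "c \<in> B" and x: "x \<in> gen_alg B {a}"
  obtains N where "\<And>M. N \<le> M \<Longrightarrow> c ^ M * x \<in> gen_alg B {c * a}"
proof -
  note R = is_subring_gen_alg[OF subring_one[OF B], of "{c * a}"]
  obtain q where q: "poly_over B q" "x = poly q a" using gen_alg_singleton_poly[OF B x] by blast
  have "c ^ M * x \<in> gen_alg B {c * a}" if M: "degree q \<le> M" for M
  proof -
    have "c ^ M * x = (\<Sum>k\<le>degree q. (coeff q k * c ^ (M - k)) * (c * a) ^ k)"
      unfolding q(2) poly_altdef sum_distrib_left
    proof (rule sum.cong)
      fix k assume "k \<in> {..degree q}"
      then have "c ^ M = c ^ (M - k) * c ^ k" using M by (simp flip: power_add)
      then show "c ^ M * (coeff q k * a ^ k) = coeff q k * c ^ (M - k) * (c * a) ^ k"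
        by (simp add: power_mult_distrib mult_ac)
    qed simp
    also have "\<dots> \<in> gen_alg B {c * a}"
    proof (rule subring_sum[OF R])
      fix k
      have "coeff q k * c ^ (M - k) \<in> B"
        using q(1) c unfolding poly_over_def by (intro subring_mult[OF B] subring_power[OF B]) auto
      moreover have "(c * a) ^ k \<in> gen_alg B {c * a}"
        by (intro subring_power[OF R] gen_alg.base_G) simp
      ultimately show "coeff q k * c ^ (M - k) * (c * a) ^ k \<in> gen_alg B {c * a}"
        by (rule subring_mult[OF R gen_alg.base_F])
    qed
    finally show ?thesis .
  qed
  then show ?thesis using that by blast
qed

lemma algebraic_over_gen_alg_rescale:
  fixes x :: "'a::idom"
  assumes B: "is_subring B" and c: "c \<in> B" "c \<noteq> 0" and x: "algebraic_over (gen_alg B {a}) x"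
  shows "algebraic_over (gen_alg B {c * a}) x"
proof -
  obtain p where p: "p \<noteq> 0" "poly_over (gen_alg B {a}) p" "poly p x = 0"
    using x unfolding algebraic_over_def by blast
  have "\<forall>i. \<exists>N. \<forall>M. N \<le> M \<longrightarrow> c ^ M * coeff p i \<in> gen_alg B {c * a}"
    using gen_alg_rescale[OF B c(1)] p(2) unfolding poly_over_def by metis
  then obtain N where N: "\<And>i M. N i \<le> M \<Longrightarrow> c ^ M * coeff p i \<in> gen_alg B {c * a}"
    by metis
  define M where "M = (\<Sum>i\<le>degree p. N i)"
  have "poly_over (gen_alg B {c * a}) (Polynomial.smult (c ^ M) p)"
    unfolding poly_over_def
  proof
    fix i
    show "coeff (Polynomial.smult (c ^ M) p) i \<in> gen_alg B {c * a}"
    proof (cases "i \<le> degree p")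
      case True
      then have "N i \<le> M" unfolding M_def by (intro member_le_sum) auto
      then show ?thesis using N by simp
    next
      case False
      then show ?thesis by (simp add: coeff_eq_0 gen_alg.base_F subring_zero[OF B])
    qed
  qed
  moreover have "Polynomial.smult (c ^ M) p \<noteq> 0" using p(1) c(2) by simp
  moreover have "poly (Polynomial.smult (c ^ M) p) x = 0" using p(3) by simp
  ultimately show ?thesis unfolding algebraic_over_def by blast
qed

lemma algebraic_over_gen_alg_singleton:
  fixes x a :: "'a::idom"
  assumes B: "is_subring B" and a: "algebraic_over B a" and x: "algebraic_over (gen_alg B {a}) x"
  shows "algebraic_over B x"
proof -
  obtain c t \<gamma> where c: "c \<in> B" "c \<noteq> 0" and \<alpha>: "integral_rel B (c * a) t \<gamma>"
    using algebraic_imp_integral_rel[OF B a] by blast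
  show ?thesis
    by (rule algebraic_over_gen_alg_integral[OF B \<alpha> algebraic_over_gen_alg_rescale[OF B c x]])
qed

lemma algebraic_over_gen_alg_finite:
  fixes x :: "'a::idom"
  assumes B: "is_subring B" and K: "finite K" "\<And>a. a \<in> K \<Longrightarrow> algebraic_over B a"
    and x: "algebraic_over (gen_alg B K) x"
  shows "algebraic_over B x"
  using K x
proof (induction K arbitrary: x rule: finite_induct)
  case empty
  have "gen_alg B {} \<subseteq> B" by (rule gen_alg_least[OF B]) auto
  then show ?case using empty algebraic_over_mono by blast
next
  case (insert a K)
  let ?BK = "gen_alg B K"
  have BK: "is_subring ?BK" by (rule is_subring_gen_alg[OF subring_one[OF B]])
  have "gen_alg B (insert a K) \<subseteq> gen_alg ?BK {a}"
  proof (rule gen_alg_least[OF is_subring_gen_alg[OF subring_one[OF BK]]])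
    show "B \<subseteq> gen_alg ?BK {a}" using gen_alg.base_F[of _ B K] gen_alg.base_F[of _ ?BK "{a}"] by blast
    show "insert a K \<subseteq> gen_alg ?BK {a}"
      using gen_alg.base_G[of _ K B] gen_alg.base_F[of _ ?BK "{a}"] gen_alg.base_G[of a "{a}" ?BK]
      by blast
  qed
  then have "algebraic_over (gen_alg ?BK {a}) x" using insert(5) algebraic_over_mono by blast
  moreover have "algebraic_over ?BK a"
    using insert(4) algebraic_over_mono[of B ?BK] gen_alg.base_F[of _ B K] by blast
  ultimately show ?case using algebraic_over_gen_alg_singleton[OF BK] insert by blast
qed

lemma algebraic_over_trans:
  fixes x :: "'a::idom"
  assumes B: "is_subring B" and x: "algebraic_over {y. algebraic_over B y} x"
  shows "algebraic_over B x"
proof -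
  obtain p where p: "p \<noteq> 0" "poly_over {y. algebraic_over B y} p" "poly p x = 0"
    using x unfolding algebraic_over_def by blast
  define K where "K = coeff p ` {..degree p}"
  have K: "finite K" "\<And>a. a \<in> K \<Longrightarrow> algebraic_over B a"
    using p(2) unfolding K_def poly_over_def by auto
  have "poly_over (gen_alg B K) p"
    unfolding poly_over_def
  proof
    fix i
    show "coeff p i \<in> gen_alg B K"
    proof (cases "i \<le> degree p")
      case True
      then show ?thesis unfolding K_def by (auto intro: gen_alg.base_G)
    next
      case False
      then show ?thesis using gen_alg.base_F[OF subring_zero[OF B]] by (simp add: coeff_eq_0)
    qed
  qed
  then show ?thesis
    using algebraic_over_gen_alg_finite[OF B K] p unfolding algebraic_over_def by blast
qed

section \<open>Algebraic independence over a subring\<close>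

definition monomial :: "'a::comm_ring_1 set \<Rightarrow> ('a \<Rightarrow> nat) \<Rightarrow> 'a" where
  "monomial T e = (\<Prod>s\<in>T. s ^ e s)"

definition monomials_indep :: "'a::comm_ring_1 set \<Rightarrow> 'a set \<Rightarrow> bool" where
  "monomials_indep C T \<longleftrightarrow>
     (\<forall>E c. finite E \<and> (\<forall>e\<in>E. \<forall>s. s \<notin> T \<longrightarrow> e s = 0) \<and> (\<forall>e\<in>E. c e \<in> C) \<and>
        (\<Sum>e\<in>E. c e * monomial T e) = 0 \<longrightarrow> (\<forall>e\<in>E. c e = 0))"

lemma monomials_indepI:
  assumes "\<And>E c e. finite E \<Longrightarrow> (\<And>e s. e \<in> E \<Longrightarrow> s \<notin> T \<Longrightarrow> e s = 0) \<Longrightarrow>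
    (\<And>e. e \<in> E \<Longrightarrow> c e \<in> C) \<Longrightarrow> (\<Sum>e\<in>E. c e * monomial T e) = 0 \<Longrightarrow> e \<in> E \<Longrightarrow> c e = 0"
  shows "monomials_indep C T"
  using assms unfolding monomials_indep_def by blast

lemma monomials_indepD:
  assumes "monomials_indep C T" "finite E" "\<And>e s. e \<in> E \<Longrightarrow> s \<notin> T \<Longrightarrow> e s = 0"
    "\<And>e. e \<in> E \<Longrightarrow> c e \<in> C" "(\<Sum>e\<in>E. c e * monomial T e) = 0" "e \<in> E"
  shows "c e = 0"
  using assms unfolding monomials_indep_def by blast

lemma monomials_indep_reindexD:
  assumes indep: "monomials_indep C T" and I: "finite I" "inj_on ex I"
    and supp: "\<And>i s. i \<in> I \<Longrightarrow> s \<notin> T \<Longrightarrow> ex i s = 0" and coeffs: "\<And>i. i \<in> I \<Longrightarrow> c i \<in> C"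
    and rel: "(\<Sum>i\<in>I. c i * monomial T (ex i)) = 0" and i: "i \<in> I"
  shows "c i = 0"
proof -
  define c' where "c' e = c (the_inv_into I ex e)" for e
  have c': "c' (ex j) = c j" if "j \<in> I" for j
    unfolding c'_def using the_inv_into_f_f[OF I(2) that] by simp
  have rel': "(\<Sum>e\<in>ex ` I. c' e * monomial T e) = 0"
    using rel by (simp add: sum.reindex[OF I(2)] c')
  have "c' (ex i) = 0"
  proof (rule monomials_indepD[OF indep finite_imageI[OF I(1)] _ _ rel' imageI[OF i]])
    show "e s = 0" if "e \<in> ex ` I" "s \<notin> T" for e s using that supp by auto
    show "c' e \<in> C" if "e \<in> ex ` I" for e using that coeffs c' by auto
  qed
  then show ?thesis using c'[OF i] by simp
qed

lemma monomial_cong: "(\<And>s. s \<in> T \<Longrightarrow> e s = e' s) \<Longrightarrow> monomial T e = monomial T e'"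
  unfolding monomial_def by (rule prod.cong) simp_all

lemma monomial_add: "monomial T (\<lambda>s. e s + f s) = monomial T e * monomial T f"
  unfolding monomial_def by (simp add: power_add prod.distrib)

lemma monomial_Un:
  "finite S \<Longrightarrow> finite Z \<Longrightarrow> S \<inter> Z = {} \<Longrightarrow> monomial (S \<union> Z) e = monomial S e * monomial Z e"
  unfolding monomial_def by (rule prod.union_disjoint)

lemma monomial_subset:
  "finite S \<Longrightarrow> T \<subseteq> S \<Longrightarrow> (\<And>s. s \<notin> T \<Longrightarrow> e s = 0) \<Longrightarrow> monomial S e = monomial T e"
  unfolding monomial_def by (rule prod.mono_neutral_right) auto

lemma monomial_nonzero:
  fixes S :: "'a::idom set"
  shows "finite S \<Longrightarrow> 0 \<notin> S \<Longrightarrow> monomial S e \<noteq> 0"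
  unfolding monomial_def by (auto simp: prod_zero_iff)

lemma monomials_indep_subset:
  assumes S: "finite S" "T \<subseteq> S" and indep: "monomials_indep C S"
  shows "monomials_indep C T"
proof (rule monomials_indepI)
  fix E c e
  assume E: "finite E" and supp: "\<And>e s. e \<in> E \<Longrightarrow> s \<notin> T \<Longrightarrow> e s = 0"
    and coeffs: "\<And>e. e \<in> E \<Longrightarrow> c e \<in> C" and rel: "(\<Sum>e\<in>E. c e * monomial T e) = 0"
    and e: "e \<in> E"
  have "(\<Sum>e\<in>E. c e * monomial S e) = (\<Sum>e\<in>E. c e * monomial T e)"
    using monomial_subset[OF S] supp by (intro sum.cong) auto
  with rel have relS: "(\<Sum>e\<in>E. c e * monomial S e) = 0" by simp
  show "c e = 0"
  proof (rule monomials_indepD[OF indep E _ coeffs relS e])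
    show "e' s = 0" if "e' \<in> E" "s \<notin> S" for e' s using that supp S(2) by blast
  qed
qed

lemma alg_indep_iff_monomials_indep:
  assumes T: "finite T"
  shows "alg_indep F T \<longleftrightarrow> monomials_indep F T"
proof
  assume indep: "alg_indep F T"
  show "monomials_indep F T"
  proof (rule monomials_indepI)
    fix E c e
    assume "finite E" "\<And>e s. e \<in> E \<Longrightarrow> s \<notin> T \<Longrightarrow> e s = 0" "\<And>e. e \<in> E \<Longrightarrow> c e \<in> F"
      "(\<Sum>e\<in>E. c e * monomial T e) = 0" and e: "e \<in> E"
    then have "finite T \<and> T \<subseteq> T \<and> finite E \<and> (\<forall>e\<in>E. \<forall>s. s \<notin> T \<longrightarrow> e s = 0) \<and>
      (\<forall>e\<in>E. c e \<in> F) \<and> (\<Sum>e\<in>E. c e * (\<Prod>s\<in>T. s ^ e s)) = 0"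
      using T by (simp add: monomial_def)
    then show "c e = 0" by (rule indep[unfolded alg_indep_def, rule_format, OF _ e])
  qed
next
  assume indep: "monomials_indep F T"
  show "alg_indep F T"
    unfolding alg_indep_def
  proof (intro allI impI ballI)
    fix T' E c e
    assume "finite T' \<and> T' \<subseteq> T \<and> finite E \<and> (\<forall>e\<in>E. \<forall>s. s \<notin> T' \<longrightarrow> e s = 0) \<and>
      (\<forall>e\<in>E. c e \<in> F) \<and> (\<Sum>e\<in>E. c e * (\<Prod>s\<in>T'. s ^ e s)) = 0" (is ?hyps)
      and e: "e \<in> E"
    show "c e = 0"
      by (rule monomials_indepD[OF monomials_indep_subset[OF T _ indep, where T = T'] _ _ _ _ e, where c = c])
        (use \<open>?hyps\<close> in \<open>auto simp: monomial_def\<close>)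
  qed
qed

lemma monomials_indep_empty: "monomials_indep C {}"
proof (rule monomials_indepI)
  fix E c and e :: "'a \<Rightarrow> nat"
  assume supp: "\<And>e s. e \<in> E \<Longrightarrow> s \<notin> {} \<Longrightarrow> e s = 0"
    and rel: "(\<Sum>e\<in>E. c e * monomial {} e) = 0" and e: "e \<in> E"
  have "e' = e" if "e' \<in> E" for e' using supp[OF that] supp[OF e] by auto
  then have "E = {e}" using e by blast
  then show "c e = 0" using rel unfolding monomial_def by simp
qed

lemma zero_notin_monomials_indep:
  assumes T: "finite T" and indep: "monomials_indep C T" and C: "1 \<in> C"
  shows "0 \<notin> T"
proof
  assume z: "0 \<in> T"
  define e where "e = (\<lambda>s::'a. if s = 0 then 1 else (0::nat))"
  have "monomial T e = 0 ^ e 0 * (\<Prod>s\<in>T - {0}. s ^ e s)"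
    unfolding monomial_def by (rule prod.remove[OF T z])
  then have "monomial T e = 0" unfolding e_def by simp
  have "(\<lambda>_. 1) e = (0::'a)"
  proof (rule monomials_indepD[OF indep, where E = "{e}" and c = "\<lambda>_. 1"])
    show "e' s = 0" if "e' \<in> {e}" "s \<notin> T" for e' s using that z unfolding e_def by auto
  qed (use C \<open>monomial T e = 0\<close> in auto)
  then show False by simp
qed

definition monomial_sums :: "'a::comm_ring_1 set \<Rightarrow> 'a set \<Rightarrow> 'a set" where
  "monomial_sums C T = {\<Sum>e\<in>E. c e * monomial T e | E c.
     finite E \<and> (\<forall>e\<in>E. \<forall>s. s \<notin> T \<longrightarrow> e s = 0) \<and> (\<forall>e\<in>E. c e \<in> C)}"

lemma monomial_sumsI:
  "finite E \<Longrightarrow> (\<And>e s. e \<in> E \<Longrightarrow> s \<notin> T \<Longrightarrow> e s = 0) \<Longrightarrow> (\<And>e. e \<in> E \<Longrightarrow> c e \<in> C) \<Longrightarrow>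
    (\<Sum>e\<in>E. c e * monomial T e) \<in> monomial_sums C T"
  unfolding monomial_sums_def by blast

lemma monomial_sumsE:
  assumes "x \<in> monomial_sums C T"
  obtains E c where "finite E" "\<And>e s. e \<in> E \<Longrightarrow> s \<notin> T \<Longrightarrow> e s = 0" "\<And>e. e \<in> E \<Longrightarrow> c e \<in> C"
    "x = (\<Sum>e\<in>E. c e * monomial T e)"
  using assms unfolding monomial_sums_def by blast

lemma monomial_sums_term:
  assumes "c \<in> C" "\<And>s. s \<notin> T \<Longrightarrow> e s = 0"
  shows "c * monomial T e \<in> monomial_sums C T"
  using monomial_sumsI[of "{e}" T "\<lambda>_. c" C] assms by simp

lemma monomial_sums_zero: "0 \<in> monomial_sums C T"
  using monomial_sumsI[of "{}" T] by simp

lemma monomial_sums_add: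
  assumes C: "is_subring C" and x: "x \<in> monomial_sums C T" and y: "y \<in> monomial_sums C T"
  shows "x + y \<in> monomial_sums C T"
proof -
  obtain E1 c1 where 1: "finite E1" "\<And>e s. e \<in> E1 \<Longrightarrow> s \<notin> T \<Longrightarrow> e s = 0"
    "\<And>e. e \<in> E1 \<Longrightarrow> c1 e \<in> C" "x = (\<Sum>e\<in>E1. c1 e * monomial T e)"
    using x by (rule monomial_sumsE) blast
  obtain E2 c2 where 2: "finite E2" "\<And>e s. e \<in> E2 \<Longrightarrow> s \<notin> T \<Longrightarrow> e s = 0"
    "\<And>e. e \<in> E2 \<Longrightarrow> c2 e \<in> C" "y = (\<Sum>e\<in>E2. c2 e * monomial T e)"
    using y by (rule monomial_sumsE) blast
  define c where "c e = (if e \<in> E1 then c1 e else 0) + (if e \<in> E2 then c2 e else 0)" for e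
  have "(\<Sum>e\<in>E1 \<union> E2. c e * monomial T e)
      = (\<Sum>e\<in>E1 \<union> E2. if e \<in> E1 then c1 e * monomial T e else 0)
        + (\<Sum>e\<in>E1 \<union> E2. if e \<in> E2 then c2 e * monomial T e else 0)"
    unfolding c_def distrib_right sum.distrib[symmetric] by (intro sum.cong) simp_all
  also have "\<dots> = x + y"
    using 1 2 by (simp add: sum.inter_restrict[symmetric] Int_absorb1)
  finally have "x + y = (\<Sum>e\<in>E1 \<union> E2. c e * monomial T e)" ..
  also have "\<dots> \<in> monomial_sums C T"
  proof (rule monomial_sumsI)
    show "c e \<in> C" if "e \<in> E1 \<union> E2" for e
      using that 1(3) 2(3) subring_add[OF C] subring_zero[OF C] unfolding c_def by auto
  qed (use 1 2 in auto)
  finally show ?thesis .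
qed

lemma monomial_sums_sum:
  "is_subring C \<Longrightarrow> (\<And>i. i \<in> I \<Longrightarrow> f i \<in> monomial_sums C T) \<Longrightarrow> sum f I \<in> monomial_sums C T"
  by (induction I rule: infinite_finite_induct) (simp_all add: monomial_sums_zero monomial_sums_add)

lemma monomial_sums_mult:
  assumes C: "is_subring C" and x: "x \<in> monomial_sums C T" and y: "y \<in> monomial_sums C T"
  shows "x * y \<in> monomial_sums C T"
proof -
  obtain E1 c1 where 1: "finite E1" "\<And>e s. e \<in> E1 \<Longrightarrow> s \<notin> T \<Longrightarrow> e s = 0"
    "\<And>e. e \<in> E1 \<Longrightarrow> c1 e \<in> C" "x = (\<Sum>e\<in>E1. c1 e * monomial T e)"
    using x by (rule monomial_sumsE) blast
  obtain E2 c2 where 2: "finite E2" "\<And>e s. e \<in> E2 \<Longrightarrow> s \<notin> T \<Longrightarrow> e s = 0"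
    "\<And>e. e \<in> E2 \<Longrightarrow> c2 e \<in> C" "y = (\<Sum>e\<in>E2. c2 e * monomial T e)"
    using y by (rule monomial_sumsE) blast
  have "x * y = (\<Sum>e\<in>E1. \<Sum>f\<in>E2. (c1 e * c2 f) * monomial T (\<lambda>s. e s + f s))"
    unfolding 1(4) 2(4) sum_product monomial_add by (simp only: mult_ac)
  also have "\<dots> \<in> monomial_sums C T"
  proof (intro monomial_sums_sum[OF C])
    fix e f assume "e \<in> E1" "f \<in> E2"
    then show "(c1 e * c2 f) * monomial T (\<lambda>s. e s + f s) \<in> monomial_sums C T"
      using 1(2,3) 2(2,3) by (intro monomial_sums_term subring_mult[OF C]) auto
  qed
  finally show ?thesis .
qed

lemma is_subring_monomial_sums:
  assumes C: "is_subring C"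
  shows "is_subring (monomial_sums C T)"
proof -
  have "1 \<in> monomial_sums C T"
    using monomial_sums_term[OF subring_one[OF C], of T "\<lambda>_. 0"] by (simp add: monomial_def)
  moreover have "- x \<in> monomial_sums C T" if x: "x \<in> monomial_sums C T" for x
  proof -
    obtain E c where "finite E" "\<And>e s. e \<in> E \<Longrightarrow> s \<notin> T \<Longrightarrow> e s = 0" "\<And>e. e \<in> E \<Longrightarrow> c e \<in> C"
      and x_eq: "x = (\<Sum>e\<in>E. c e * monomial T e)"
      using x by (rule monomial_sumsE) blast
    then have "(\<Sum>e\<in>E. (- c e) * monomial T e) \<in> monomial_sums C T"
      by (intro monomial_sumsI subring_uminus[OF C])
    then show ?thesis unfolding x_eq by (simp add: sum_negf)
  qed
  ultimately show ?thesis
    unfolding is_subring_def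
    using monomial_sums_zero monomial_sums_add[OF C] monomial_sums_mult[OF C] by auto
qed

lemma gen_alg_eq_monomial_sums:
  assumes C: "is_subring C" and T: "finite T"
  shows "gen_alg C T = monomial_sums C T"
proof
  show "gen_alg C T \<subseteq> monomial_sums C T"
  proof (rule gen_alg_least[OF is_subring_monomial_sums[OF C]])
    show "C \<subseteq> monomial_sums C T"
      using monomial_sums_term[of _ C T "\<lambda>_. 0"] by (auto simp: monomial_def)
    show "T \<subseteq> monomial_sums C T"
    proof
      fix g assume g: "g \<in> T"
      have "monomial T (\<lambda>s. if s = g then 1 else 0) = (\<Prod>s\<in>T. if s = g then s else 1)"
        unfolding monomial_def by (rule prod.cong) auto
      also have "\<dots> = g" using T g by simp
      finally have "monomial T (\<lambda>s. if s = g then 1 else 0) = g" .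
      moreover have "1 * monomial T (\<lambda>s. if s = g then 1 else 0) \<in> monomial_sums C T"
        using g by (intro monomial_sums_term[OF subring_one[OF C]]) auto
      ultimately show "g \<in> monomial_sums C T" by simp
    qed
  qed
  show "monomial_sums C T \<subseteq> gen_alg C T"
  proof
    fix x assume "x \<in> monomial_sums C T"
    then obtain E c where x: "\<And>e. e \<in> E \<Longrightarrow> c e \<in> C" "x = (\<Sum>e\<in>E. c e * monomial T e)"
      by (rule monomial_sumsE) blast
    note G = is_subring_gen_alg[OF subring_one[OF C], of T]
    have "c e * monomial T e \<in> gen_alg C T" if "e \<in> E" for e
      using x(1)[OF that] unfolding monomial_def
      by (intro subring_mult[OF G gen_alg.base_F] subring_prod[OF G] subring_power[OF G]
          gen_alg.base_G)
    then show "x \<in> gen_alg C T" unfolding x(2) by (rule subring_sum[OF G])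
  qed
qed

lemma monomial_Un_add:
  assumes fin: "finite S" "finite Z" and disj: "S \<inter> Z = {}"
    and e: "\<And>s. s \<notin> S \<Longrightarrow> e s = 0" and f: "\<And>s. s \<notin> Z \<Longrightarrow> f s = 0"
  shows "monomial (S \<union> Z) (\<lambda>s. e s + f s) = monomial S e * monomial Z f"
proof -
  have "f s = 0" if "s \<in> S" for s using f disj that by blast
  moreover have "e s = 0" if "s \<in> Z" for s using e disj that by blast
  ultimately have "monomial S (\<lambda>s. e s + f s) = monomial S e"
    "monomial Z (\<lambda>s. e s + f s) = monomial Z f"
    by (auto intro!: monomial_cong)
  then show ?thesis using monomial_Un[OF fin disj] by simp
qed

text \<open>Grouping a relation among the monomials in \<open>S \<union> Z\<close> by the \<open>Z\<close>-part of the exponents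
  yields a relation among the monomials in \<open>Z\<close> with coefficients in \<open>C[S] \<subseteq> D\<close>.\<close>

lemma monomials_indep_Un:
  assumes fin: "finite S" "finite Z" and disj: "S \<inter> Z = {}" and C: "is_subring C"
    and indep_S: "monomials_indep C S" and indep_Z: "monomials_indep D Z"
    and D: "gen_alg C S \<subseteq> D"
  shows "monomials_indep C (S \<union> Z)"
proof (rule monomials_indepI)
  fix E c e0
  assume E: "finite E" and supp: "\<And>e s. e \<in> E \<Longrightarrow> s \<notin> S \<union> Z \<Longrightarrow> e s = 0"
    and coeffs: "\<And>e. e \<in> E \<Longrightarrow> c e \<in> C" and rel: "(\<Sum>e\<in>E. c e * monomial (S \<union> Z) e) = 0"
    and e0: "e0 \<in> E"
  define rs where "rs e = (\<lambda>s. if s \<in> S then e s else 0)" for e :: "'a \<Rightarrow> nat"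
  define rz where "rz e = (\<lambda>s. if s \<in> Z then e s else 0)" for e :: "'a \<Rightarrow> nat"
  define fiber where "fiber f = {e \<in> E. rz e = f}" for f
  define g where "g f = (\<Sum>e\<in>fiber f. c e * monomial S (rs e))" for f
  have split: "e = (\<lambda>s. rs e s + rz e s)" if "e \<in> E" for e
    using supp[OF that] disj unfolding rs_def rz_def by fastforce
  have "(\<Sum>f\<in>rz ` E. g f * monomial Z f) = (\<Sum>e\<in>E. c e * monomial (S \<union> Z) e)"
  proof -
    have "monomial (S \<union> Z) e = monomial S (rs e) * monomial Z (rz e)" if "e \<in> E" for e
      by (subst split[OF that]) (rule monomial_Un_add[OF fin disj], simp_all add: rs_def rz_def)
    then show ?thesis
      unfolding sum.image_gen[OF E, of _ rz] g_def fiber_def sum_distrib_right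
      by (intro sum.cong) (auto simp: mult.assoc)
  qed
  then have rel_Z: "(\<Sum>f\<in>rz ` E. g f * monomial Z f) = 0" using rel by simp
  have "g f \<in> monomial_sums C S" for f
    unfolding g_def using coeffs
    by (intro monomial_sums_sum[OF C] monomial_sums_term) (auto simp: fiber_def rs_def)
  then have "g f \<in> D" for f using D gen_alg_eq_monomial_sums[OF C fin(1)] by blast
  then have "g (rz e0) = 0"
    using E e0 by (intro monomials_indepD[OF indep_Z _ _ _ rel_Z]) (auto simp: rz_def)
  then have rel_S: "(\<Sum>e\<in>fiber (rz e0). c e * monomial S (rs e)) = 0" unfolding g_def .
  have inj: "inj_on rs (fiber (rz e0))"
  proof (rule inj_onI)
    fix e1 e2 assume "e1 \<in> fiber (rz e0)" "e2 \<in> fiber (rz e0)" "rs e1 = rs e2"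
    then have "e1 \<in> E" "e2 \<in> E" "rz e1 = rz e2" "rs e1 = rs e2" unfolding fiber_def by auto
    then show "e1 = e2" using split by metis
  qed
  show "c e0 = 0"
    using E coeffs e0
    by (intro monomials_indep_reindexD[OF indep_S _ inj _ _ rel_S]) (auto simp: fiber_def rs_def)
qed

lemma monomial_sums_choice:
  assumes x: "\<And>i. i \<in> I \<Longrightarrow> x i \<in> monomial_sums C T"
  obtains E c where "\<And>i. i \<in> I \<Longrightarrow> finite (E i)"
    "\<And>i e s. i \<in> I \<Longrightarrow> e \<in> E i \<Longrightarrow> s \<notin> T \<Longrightarrow> e s = 0"
    "\<And>i e. i \<in> I \<Longrightarrow> e \<in> E i \<Longrightarrow> c i e \<in> C"
    "\<And>i. i \<in> I \<Longrightarrow> x i = (\<Sum>e\<in>E i. c i e * monomial T e)"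
proof -
  have "\<forall>i\<in>I. \<exists>p. finite (fst p) \<and> (\<forall>e\<in>fst p. \<forall>s. s \<notin> T \<longrightarrow> e s = 0) \<and>
      (\<forall>e\<in>fst p. snd p e \<in> C) \<and> x i = (\<Sum>e\<in>fst p. snd p e * monomial T e)"
  proof
    fix i assume "i \<in> I"
    obtain E c where "finite E" "\<And>e s. e \<in> E \<Longrightarrow> s \<notin> T \<Longrightarrow> e s = 0" "\<And>e. e \<in> E \<Longrightarrow> c e \<in> C"
      "x i = (\<Sum>e\<in>E. c e * monomial T e)"
      using x[OF \<open>i \<in> I\<close>] by (rule monomial_sumsE) blast
    then show "\<exists>p. finite (fst p) \<and> (\<forall>e\<in>fst p. \<forall>s. s \<notin> T \<longrightarrow> e s = 0) \<and>
      (\<forall>e\<in>fst p. snd p e \<in> C) \<and> x i = (\<Sum>e\<in>fst p. snd p e * monomial T e)"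
      by (intro exI[of _ "(E, c)"]) simp
  qed
  then have "\<exists>p. \<forall>i\<in>I. finite (fst (p i)) \<and> (\<forall>e\<in>fst (p i). \<forall>s. s \<notin> T \<longrightarrow> e s = 0) \<and>
      (\<forall>e\<in>fst (p i). snd (p i) e \<in> C) \<and> x i = (\<Sum>e\<in>fst (p i). snd (p i) e * monomial T e)"
    by (rule bchoice)
  then obtain p where "\<forall>i\<in>I. finite (fst (p i)) \<and> (\<forall>e\<in>fst (p i). \<forall>s. s \<notin> T \<longrightarrow> e s = 0) \<and>
      (\<forall>e\<in>fst (p i). snd (p i) e \<in> C) \<and> x i = (\<Sum>e\<in>fst (p i). snd (p i) e * monomial T e)"
    ..
  then show ?thesis by (intro that[of "\<lambda>i. fst (p i)" "\<lambda>i. snd (p i)"]) auto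
qed

lemma inj_on_add_exponents:
  fixes E :: "('a \<Rightarrow> nat) \<Rightarrow> ('a \<Rightarrow> nat) set"
  assumes disj: "S \<inter> Z = {}" and supp: "\<And>f s. f \<in> F \<Longrightarrow> s \<notin> Z \<Longrightarrow> f s = 0"
    and supp_E: "\<And>f e s. f \<in> F \<Longrightarrow> e \<in> E f \<Longrightarrow> s \<notin> S \<Longrightarrow> e s = 0"
  shows "inj_on (\<lambda>(f, e). \<lambda>s. e s + f s) (Sigma F E)"
proof (rule inj_onI)
  fix i j assume "i \<in> Sigma F E" "j \<in> Sigma F E" and eq: "(\<lambda>(f, e). \<lambda>s. e s + f s) i = (\<lambda>(f, e). \<lambda>s. e s + f s) j"
  then obtain f1 e1 f2 e2 where i: "i = (f1, e1)" "f1 \<in> F" "e1 \<in> E f1"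
    and j: "j = (f2, e2)" "f2 \<in> F" "e2 \<in> E f2"
    by auto
  have "e1 s = e2 s \<and> f1 s = f2 s" for s
  proof (cases "s \<in> S")
    case True
    then have "s \<notin> Z" using disj by blast
    then show ?thesis
      using fun_cong[OF eq, of s] supp[OF i(2)] supp[OF j(2)] unfolding i j by simp
  next
    case False
    then show ?thesis
      using fun_cong[OF eq, of s] supp_E[OF i(2,3) False] supp_E[OF j(2,3) False]
      unfolding i j by simp
  qed
  then show "i = j" unfolding i j by (simp add: fun_eq_iff)
qed

text \<open>Conversely, expanding the \<open>C[S]\<close>-coefficients of a relation among the monomials in \<open>Z\<close>
  gives a relation among the monomials in \<open>S \<union> Z\<close>.\<close>

lemma monomials_indep_gen_alg:
  assumes C: "is_subring C" and fin: "finite S" "finite Z" and disj: "S \<inter> Z = {}"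
    and indep: "monomials_indep C (S \<union> Z)"
  shows "monomials_indep (gen_alg C S) Z"
proof (rule monomials_indepI)
  fix F d f0
  assume F: "finite F" and supp: "\<And>f s. f \<in> F \<Longrightarrow> s \<notin> Z \<Longrightarrow> f s = 0"
    and coeffs: "\<And>f. f \<in> F \<Longrightarrow> d f \<in> gen_alg C S" and rel: "(\<Sum>f\<in>F. d f * monomial Z f) = 0"
    and f0: "f0 \<in> F"
  obtain E c where E: "\<And>f. f \<in> F \<Longrightarrow> finite (E f)"
    and supp_E: "\<And>f e s. f \<in> F \<Longrightarrow> e \<in> E f \<Longrightarrow> s \<notin> S \<Longrightarrow> e s = 0"
    and coeffs_E: "\<And>f e. f \<in> F \<Longrightarrow> e \<in> E f \<Longrightarrow> c f e \<in> C"
    and d: "\<And>f. f \<in> F \<Longrightarrow> d f = (\<Sum>e\<in>E f. c f e * monomial S e)"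
    using coeffs[unfolded gen_alg_eq_monomial_sums[OF C fin(1)]] by (rule monomial_sums_choice) auto
  define I where "I = Sigma F E"
  define ex where "ex = (\<lambda>(f :: 'a \<Rightarrow> nat, e). \<lambda>s. e s + f s)"
  have mon: "monomial (S \<union> Z) (ex (f, e)) = monomial S e * monomial Z f" if "f \<in> F" "e \<in> E f" for f e
    unfolding ex_def by (simp, rule monomial_Un_add[OF fin disj]) (use that supp supp_E in blast)+
  have "(\<Sum>i\<in>I. c (fst i) (snd i) * monomial (S \<union> Z) (ex i))
      = (\<Sum>(f, e)\<in>I. c f e * monomial S e * monomial Z f)"
    unfolding I_def by (rule sum.cong) (auto simp: mon mult.assoc)
  also have "\<dots> = (\<Sum>f\<in>F. \<Sum>e\<in>E f. c f e * monomial S e * monomial Z f)"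
    unfolding I_def using F E by (subst sum.Sigma) auto
  also have "\<dots> = (\<Sum>f\<in>F. d f * monomial Z f)"
    using d by (simp add: sum_distrib_right)
  finally have rel_I: "(\<Sum>i\<in>I. c (fst i) (snd i) * monomial (S \<union> Z) (ex i)) = 0"
    using rel by simp
  have inj: "inj_on ex I"
    unfolding I_def ex_def
    by (rule inj_on_add_exponents[where S = S and Z = Z and F = F and E = E]) (fact disj supp supp_E)+
  have supp_I: "ex i s = 0" if i: "i \<in> I" and s: "s \<notin> S \<union> Z" for i s
  proof -
    obtain f e where fe: "i = (f, e)" "f \<in> F" "e \<in> E f" using i unfolding I_def by auto
    then show ?thesis using s supp[OF fe(2), of s] supp_E[OF fe(2,3), of s] unfolding ex_def by simp
  qed
  have coeffs_I: "c (fst i) (snd i) \<in> C" if "i \<in> I" for i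
    using that coeffs_E unfolding I_def by auto
  have "finite I" using F E unfolding I_def by simp
  then have "c f0 e = 0" if "e \<in> E f0" for e
    using monomials_indep_reindexD[OF indep _ inj supp_I coeffs_I rel_I, of "(f0, e)"] that f0
    unfolding I_def by simp
  then show "d f0 = 0" using d[OF f0] by simp
qed

lemma not_algebraic_if_monomials_indep_singleton:
  assumes indep: "monomials_indep D {x}"
  shows "\<not> algebraic_over D x"
proof
  assume "algebraic_over D x"
  then obtain p where p: "p \<noteq> 0" "poly_over D p" "poly p x = 0"
    unfolding algebraic_over_def by blast
  define ex where "ex j = (\<lambda>s. if s = x then j else (0::nat))" for j
  have rel: "(\<Sum>j\<le>degree p. coeff p j * monomial {x} (ex j)) = 0"
    using p(3) by (simp add: poly_altdef monomial_def ex_def)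
  have "coeff p (degree p) = 0"
  proof (rule monomials_indep_reindexD[OF indep _ _ _ _ rel])
    show "inj_on ex {..degree p}"
      by (rule inj_onI) (drule fun_cong[of _ _ x], simp add: ex_def)
    show "ex j s = 0" if "s \<notin> {x}" for j s using that by (simp add: ex_def)
    show "coeff p j \<in> D" for j using p(2) unfolding poly_over_def by blast
  qed simp_all
  then show False using p(1) by simp
qed

lemma monomials_indep_singleton_if_not_algebraic:
  assumes D: "is_subring D" and nalg: "\<not> algebraic_over D x"
  shows "monomials_indep D {x}"
proof (rule monomials_indepI)
  fix E c e0
  assume E: "finite E" and supp: "\<And>e s. e \<in> E \<Longrightarrow> s \<notin> {x} \<Longrightarrow> e s = 0"
    and coeffs: "\<And>e. e \<in> E \<Longrightarrow> c e \<in> D" and rel: "(\<Sum>e\<in>E. c e * monomial {x} e) = 0"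
    and e0: "e0 \<in> E"
  have inj: "e1 = e2" if "e1 \<in> E" "e2 \<in> E" "e1 x = e2 x" for e1 e2
  proof
    fix s
    show "e1 s = e2 s"
      using supp[OF that(1), of s] supp[OF that(2), of s] that(3) by (cases "s = x") auto
  qed
  define p where "p = (\<Sum>e\<in>E. monom (c e) (e x))"
  have coeff_p: "coeff p n = (\<Sum>e\<in>E. if e x = n then c e else 0)" for n
    unfolding p_def coeff_sum coeff_monom by (simp add: eq_commute)
  have "poly_over D p"
    unfolding poly_over_def coeff_p using coeffs subring_zero[OF D] by (auto intro: subring_sum[OF D])
  moreover have "poly p x = 0"
    using rel unfolding p_def poly_sum poly_monom monomial_def by simp
  ultimately have "p = 0" using nalg unfolding algebraic_over_def by blast
  moreover have "coeff p (e0 x) = (\<Sum>e\<in>E. if e = e0 then c e else 0)"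
    unfolding coeff_p by (rule sum.cong) (use inj e0 in auto)
  ultimately show "c e0 = 0" using E e0 by simp
qed

lemma monomials_indep_singleton_iff:
  "is_subring D \<Longrightarrow> monomials_indep D {x} \<longleftrightarrow> \<not> algebraic_over D x"
  using not_algebraic_if_monomials_indep_singleton monomials_indep_singleton_if_not_algebraic
  by blast

lemma monomials_indep_disjoint:
  assumes R: "is_subring R" and Z: "finite Z" and indep: "monomials_indep R Z"
  shows "R \<inter> Z = {}"
proof (rule ccontr)
  assume "R \<inter> Z \<noteq> {}"
  then obtain s where "s \<in> R" "s \<in> Z" by blast
  then have "monomials_indep R {s}" using monomials_indep_subset[OF Z _ indep] by blast
  then show False
    using not_algebraic_if_monomials_indep_singleton algebraic_over_mem[OF R \<open>s \<in> R\<close>] by blast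
qed

lemma monomials_indep_insert_iff:
  assumes C: "is_subring C" and T: "finite T" "x \<notin> T"
  shows "monomials_indep C (insert x T) \<longleftrightarrow>
    monomials_indep C T \<and> \<not> algebraic_over (gen_alg C T) x"
proof -
  have CT: "is_subring (gen_alg C T)" by (rule is_subring_gen_alg[OF subring_one[OF C]])
  have disj: "T \<inter> {x} = {}" using T(2) by simp
  show ?thesis
  proof
    assume indep: "monomials_indep C (insert x T)"
    then have "monomials_indep (gen_alg C T) {x}"
      using monomials_indep_gen_alg[OF C T(1) finite.insertI[OF finite.emptyI] disj] by simp
    then show "monomials_indep C T \<and> \<not> algebraic_over (gen_alg C T) x"
      using indep monomials_indep_subset[OF finite.insertI[OF T(1)] subset_insertI]
        monomials_indep_singleton_iff[OF CT] by blast
  next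
    assume "monomials_indep C T \<and> \<not> algebraic_over (gen_alg C T) x"
    then show "monomials_indep C (insert x T)"
      using monomials_indep_Un[OF T(1) _ disj C _ _ order_refl] monomials_indep_singleton_iff[OF CT]
      by simp
  qed
qed

text \<open>Algebraic over the ring \<open>C[T]\<close> rather than over its field of fractions; for a field \<open>C\<close> this
  is the algebraic closure of \<open>C(T)\<close> in the ambient domain.\<close>

definition alg_closure :: "'a::idom set \<Rightarrow> 'a set \<Rightarrow> 'a set" where
  "alg_closure C T = {x. algebraic_over (gen_alg C T) x}"

lemma is_subring_alg_closure: "is_subring C \<Longrightarrow> is_subring (alg_closure C T)"
  unfolding alg_closure_def by (rule is_subring_algebraic_over[OF is_subring_gen_alg[OF subring_one]])

lemma gen_alg_subset_alg_closure: "is_subring C \<Longrightarrow> gen_alg C T \<subseteq> alg_closure C T"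
  unfolding alg_closure_def using algebraic_over_mem[OF is_subring_gen_alg[OF subring_one]] by blast

lemma mem_alg_closure: "is_subring C \<Longrightarrow> x \<in> T \<Longrightarrow> x \<in> alg_closure C T"
  using gen_alg_subset_alg_closure gen_alg.base_G by blast

lemma alg_closure_subset:
  assumes C: "is_subring C" and W: "W \<subseteq> alg_closure C U"
  shows "alg_closure C W \<subseteq> alg_closure C U"
proof
  fix x assume "x \<in> alg_closure C W"
  moreover have "gen_alg C W \<subseteq> alg_closure C U"
    using W gen_alg_subset_alg_closure[OF C, of U] gen_alg.base_F[of _ C U]
    by (intro gen_alg_least[OF is_subring_alg_closure[OF C]]) blast+
  ultimately have "algebraic_over {y. algebraic_over (gen_alg C U) y} x"
    unfolding alg_closure_def using algebraic_over_mono by blast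
  then show "x \<in> alg_closure C U"
    unfolding alg_closure_def
    using algebraic_over_trans[OF is_subring_gen_alg[OF subring_one[OF C]]] by blast
qed

lemma alg_closure_exchange:
  assumes C: "is_subring C" and U: "finite U" "monomials_indep C U" "U \<subseteq> alg_closure C W"
    and u: "u \<in> U" "u \<notin> W"
  obtains w where "w \<in> W - U" "monomials_indep C (insert w (U - {u}))"
proof -
  let ?U' = "U - {u}"
  have U': "finite ?U'" "monomials_indep C ?U'"
    using U(1) monomials_indep_subset[OF U(1) Diff_subset U(2)] by auto
  have "u \<notin> alg_closure C ?U'"
    using monomials_indep_insert_iff[OF C U'(1), of u] U(2) u(1)
    unfolding alg_closure_def by (simp add: insert_absorb)
  moreover have "W \<subseteq> alg_closure C ?U'" if "\<forall>w\<in>W - U. \<not> monomials_indep C (insert w ?U')"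
  proof
    fix w assume w: "w \<in> W"
    show "w \<in> alg_closure C ?U'"
    proof (cases "w \<in> U")
      case True
      then show ?thesis using w u(2) by (auto intro: mem_alg_closure[OF C])
    next
      case False
      then show ?thesis
        using that w monomials_indep_insert_iff[OF C U'(1), of w] U'(2)
        unfolding alg_closure_def by auto
    qed
  qed
  ultimately show ?thesis
    using that alg_closure_subset[OF C] U(3) u(1) by blast
qed

lemma card_le_if_subset_alg_closure:
  assumes C: "is_subring C" and W: "finite W"
  shows "finite U \<Longrightarrow> monomials_indep C U \<Longrightarrow> U \<subseteq> alg_closure C W \<Longrightarrow> card U \<le> card W"
proof (induction "card (U - W)" arbitrary: U rule: less_induct)
  case less
  show ?case
  proof (cases "U \<subseteq> W")
    case True
    then show ?thesis using card_mono[OF W] by blast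
  next
    case False
    then obtain u where u: "u \<in> U" "u \<notin> W" by blast
    obtain w where w: "w \<in> W - U" "monomials_indep C (insert w (U - {u}))"
      using alg_closure_exchange[OF C less(2,3,4) u] by blast
    let ?U = "insert w (U - {u})"
    have "card ?U = Suc (card (U - {u}))" using less(2) w(1) by (intro card_insert_disjoint) auto
    also have "\<dots> = card U" by (rule card_Suc_Diff1[OF less(2) u(1)])
    finally have "card ?U = card U" .
    moreover have "card (?U - W) < card (U - W)"
    proof -
      have "?U - W = (U - W) - {u}" using w(1) by auto
      then show ?thesis using card_Diff1_less[of "U - W" u] less(2) u by simp
    qed
    moreover have "?U \<subseteq> alg_closure C W"
      using less(4) w(1) mem_alg_closure[OF C] by blast
    ultimately show ?thesis using less(1)[of ?U] less(2) w(2) by simp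
  qed
qed

lemma exists_maximal_indep_extension:
  assumes C: "is_subring C" and Y: "finite Y" "monomials_indep C Y"
    and bound: "\<And>Z. Z \<subseteq> X \<Longrightarrow> finite Z \<Longrightarrow> monomials_indep C (Y \<union> Z) \<Longrightarrow> card Z \<le> N"
  obtains Z where "Z \<subseteq> X" "finite Z" "Y \<inter> Z = {}" "monomials_indep C (Y \<union> Z)"
    "X \<subseteq> alg_closure C (Y \<union> Z)"
proof -
  let ?P = "\<lambda>Z. Z \<subseteq> X \<and> finite Z \<and> Y \<inter> Z = {} \<and> monomials_indep C (Y \<union> Z)"
  obtain Z where Z: "?P Z" and max: "\<And>Z'. ?P Z' \<Longrightarrow> card Z' \<le> card Z"
    using Lattices_Big.ex_has_greatest_nat[of ?P "{}" card "Suc N"] Y bound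
    by (auto simp: less_Suc_eq_le)
  have "h \<in> alg_closure C (Y \<union> Z)" if h: "h \<in> X" for h
  proof (cases "h \<in> Y \<union> Z")
    case True
    then show ?thesis by (rule mem_alg_closure[OF C])
  next
    case False
    have "card (insert h Z) \<le> card Z" if "?P (insert h Z)" using max[OF that] .
    then have "\<not> monomials_indep C (insert h (Y \<union> Z))" using Z h False by auto
    then show ?thesis
      using monomials_indep_insert_iff[OF C _ False] Z Y unfolding alg_closure_def by auto
  qed
  then show ?thesis using that Z by blast
qed

lemma monomials_indep_algebraic_coeffs:
  fixes D :: "'a::idom set"
  assumes D: "is_subring D" and Z: "finite Z" and indep: "monomials_indep D Z"
  shows "monomials_indep {x. algebraic_over D x} Z"
  using Z indep
proof (induction Z rule: finite_induct)
  case empty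
  show ?case by (rule monomials_indep_empty)
next
  case (insert z Z)
  let ?A = "{x. algebraic_over D x}"
  have DZ: "is_subring (gen_alg D Z)" by (rule is_subring_gen_alg[OF subring_one[OF D]])
  have Z: "monomials_indep D Z" and nalg: "\<not> algebraic_over (gen_alg D Z) z"
    using insert monomials_indep_insert_iff[OF D] by auto
  have "gen_alg ?A Z \<subseteq> {x. algebraic_over (gen_alg D Z) x}"
  proof (rule gen_alg_least[OF is_subring_algebraic_over[OF DZ]])
    show "?A \<subseteq> {x. algebraic_over (gen_alg D Z) x}"
      using algebraic_over_mono gen_alg.base_F[of _ D Z] by blast
    show "Z \<subseteq> {x. algebraic_over (gen_alg D Z) x}"
      using algebraic_over_mem[OF DZ] gen_alg.base_G[of _ Z D] by blast
  qed
  then have "\<not> algebraic_over (gen_alg ?A Z) z"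
    using nalg algebraic_over_trans[OF DZ] algebraic_over_mono by blast
  then show ?case
    using monomials_indep_insert_iff[OF is_subring_algebraic_over[OF D] insert(1,2)] insert.IH[OF Z]
    by simp
qed

lemma monomials_indep_image:
  fixes f :: "'b \<Rightarrow> 'a::comm_ring_1"
  assumes inj: "inj_on f S" and indep: "monomials_indep C (f ` S)" and E: "finite E"
    and supp: "\<And>e s. e \<in> E \<Longrightarrow> s \<notin> S \<Longrightarrow> e s = 0" and coeffs: "\<And>e. e \<in> E \<Longrightarrow> c e \<in> C"
    and rel: "(\<Sum>e\<in>E. c e * (\<Prod>s\<in>S. f s ^ e s)) = 0" and e: "e \<in> E"
  shows "c e = 0"
proof -
  define ex where "ex e = (\<lambda>t. if t \<in> f ` S then e (the_inv_into S f t) else 0)" for e :: "'b \<Rightarrow> nat"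
  have mon: "monomial (f ` S) (ex e) = (\<Prod>s\<in>S. f s ^ e s)" for e
    unfolding monomial_def prod.reindex[OF inj] ex_def
    by (rule prod.cong) (simp_all add: the_inv_into_f_f[OF inj])
  have inj_ex: "inj_on ex E"
  proof (rule inj_onI)
    fix e1 e2 assume e12: "e1 \<in> E" "e2 \<in> E" "ex e1 = ex e2"
    show "e1 = e2"
    proof
      fix s
      show "e1 s = e2 s"
      proof (cases "s \<in> S")
        case True
        then show ?thesis
          using fun_cong[OF e12(3), of "f s"] unfolding ex_def by (simp add: the_inv_into_f_f[OF inj])
      next
        case False
        then show ?thesis using supp[OF e12(1) False] supp[OF e12(2) False] by simp
      qed
    qed
  qed
  have rel': "(\<Sum>e\<in>E. c e * monomial (f ` S) (ex e)) = 0" using rel by (simp add: mon)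
  show ?thesis
    by (rule monomials_indep_reindexD[OF indep E inj_ex _ coeffs rel' e]) (simp add: ex_def)
qed

lemma alg_closure_UNIV:
  assumes "is_subring C" "gen_alg C H = UNIV" "H \<subseteq> alg_closure C W"
  shows "alg_closure C W = UNIV"
  using gen_alg_subset_alg_closure[OF assms(1), of H] alg_closure_subset[OF assms(1,3)] assms(2)
  by blast

section \<open>Transcendence degree via independent monomials\<close>

lemma trdeg_eq_card:
  assumes S0: "finite S0" "S0 \<subseteq> X" "alg_indep F S0"
    and max: "\<And>S. finite S \<Longrightarrow> S \<subseteq> X \<Longrightarrow> alg_indep F S \<Longrightarrow> card S \<le> card S0"
  shows "trdeg F X = enat (card S0)"
  unfolding trdeg_def using assms by (intro antisym Sup_least Sup_upper) auto

lemma is_subring_subalgebra: "is_subring F \<Longrightarrow> is_subalgebra F R \<Longrightarrow> is_subring R"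
  unfolding is_subalgebra_def is_subring_def by auto

lemma mem_Fspan: "1 \<in> F \<Longrightarrow> v \<in> S \<Longrightarrow> v \<in> Fspan F S"
  unfolding Fspan_def by (intro CollectI exI[of _ "1::nat"] exI[of _ "\<lambda>_. 1"] exI[of _ "\<lambda>_. v"]) simp

lemma Fspan_subset:
  assumes D: "is_subring D" and "F \<subseteq> D" "S \<subseteq> D"
  shows "Fspan F S \<subseteq> D"
proof
  fix x assume "x \<in> Fspan F S"
  then obtain n :: nat and c v where "\<forall>i<n. c i \<in> F \<and> v i \<in> S" "x = (\<Sum>i<n. c i * v i)"
    unfolding Fspan_def by blast
  then show "x \<in> D" using assms by (auto intro!: subring_sum[OF D] subring_mult[OF D])
qed

section \<open>Initial forms in a graded domain\<close>

locale graded_domain =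
  fixes Ak :: "nat \<Rightarrow> 'a::idom set"
  assumes graded: "affine_graded_domain Ak"
begin

abbreviation "F \<equiv> Ak 0"
abbreviation "hc \<equiv> hcomp Ak"
abbreviation "ini \<equiv> initial Ak"

lemma
  shows F_subfield: "is_subfield F"
    and Ak_zero: "0 \<in> Ak k"
    and Ak_add: "x \<in> Ak k \<Longrightarrow> y \<in> Ak k \<Longrightarrow> x + y \<in> Ak k"
    and Ak_mult: "x \<in> Ak i \<Longrightarrow> y \<in> Ak j \<Longrightarrow> x * y \<in> Ak (i + j)"
    and homogeneous_decomposition:
      "\<exists>!c. (\<forall>k. c k \<in> Ak k) \<and> finite {k. c k \<noteq> 0} \<and> a = (\<Sum>k\<in>{k. c k \<noteq> 0}. c k)"
    and finitely_generated: "\<exists>G. finite G \<and> gen_alg F G = UNIV"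
  using graded unfolding affine_graded_domain_def by simp_all

lemma is_subring_F: "is_subring F"
  using F_subfield unfolding is_subfield_def is_subring_def by simp

lemma Ak_sum: "(\<And>i. i \<in> I \<Longrightarrow> f i \<in> Ak k) \<Longrightarrow> sum f I \<in> Ak k"
  by (induction I rule: infinite_finite_induct) (simp_all add: Ak_zero Ak_add)

lemma hc_decomposition:
  "(\<forall>k. hc a k \<in> Ak k) \<and> finite {k. hc a k \<noteq> 0} \<and> a = (\<Sum>k\<in>{k. hc a k \<noteq> 0}. hc a k)"
  unfolding hcomp_def by (rule theI'[OF homogeneous_decomposition])

lemma hc_in_Ak: "hc a k \<in> Ak k"
  using hc_decomposition by blast

text \<open>A homogeneous decomposition is the coefficient sequence of a polynomial evaluated at \<open>1\<close>;
  this makes \<open>hc\<close> additive and multiplicative via \<open>coeff_add\<close> and \<open>coeff_mult\<close>.\<close>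

lemma hc_eq_coeff:
  assumes "\<And>k. coeff p k \<in> Ak k" "a = poly p 1"
  shows "hc a = coeff p"
  unfolding hcomp_def
proof (rule the1_equality[OF homogeneous_decomposition], intro conjI allI)
  show "coeff p k \<in> Ak k" for k by (rule assms(1))
  have sub: "{k. coeff p k \<noteq> 0} \<subseteq> {..degree p}" by (auto intro: le_degree)
  then show "finite {k. coeff p k \<noteq> 0}" using finite_subset by blast
  have "a = (\<Sum>k\<le>degree p. coeff p k)" unfolding assms(2) poly_altdef by simp
  also have "\<dots> = (\<Sum>k\<in>{k. coeff p k \<noteq> 0}. coeff p k)"
    by (rule sum.mono_neutral_right) (use sub in auto)
  finally show "a = (\<Sum>k\<in>{k. coeff p k \<noteq> 0}. coeff p k)" .
qed

lemma hc_poly_repr: obtains p where "coeff p = hc a" "poly p 1 = a"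
proof -
  obtain K where K: "\<And>k. hc a k \<noteq> 0 \<Longrightarrow> k < K"
    using finite_nat_bounded[of "{k. hc a k \<noteq> 0}"] hc_decomposition by auto
  define p where "p = (\<Sum>k<K. monom (hc a k) k)"
  have coeff: "coeff p n = hc a n" for n
    using K[of n] unfolding p_def coeff_sum coeff_monom by (cases "n < K") auto
  have "poly p 1 = (\<Sum>k<K. hc a k)" unfolding p_def poly_sum poly_monom by simp
  also have "\<dots> = (\<Sum>k\<in>{k. hc a k \<noteq> 0}. hc a k)"
    by (rule sum.mono_neutral_right) (use K in auto)
  finally have "poly p 1 = a" using hc_decomposition[of a] by simp
  moreover have "coeff p = hc a" using coeff by (simp add: fun_eq_iff)
  ultimately show ?thesis using that by blast
qed

lemma hc_add: "hc (a + b) k = hc a k + hc b k"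
proof -
  obtain p where p: "coeff p = hc a" "poly p 1 = a" by (rule hc_poly_repr)
  obtain q where q: "coeff q = hc b" "poly q 1 = b" by (rule hc_poly_repr)
  have "hc (a + b) = coeff (p + q)"
    by (rule hc_eq_coeff) (simp_all add: p q hc_in_Ak Ak_add)
  then show ?thesis using p q by simp
qed

lemma hc_mult: "hc (a * b) n = (\<Sum>i\<le>n. hc a i * hc b (n - i))"
proof -
  obtain p where p: "coeff p = hc a" "poly p 1 = a" by (rule hc_poly_repr)
  obtain q where q: "coeff q = hc b" "poly q 1 = b" by (rule hc_poly_repr)
  have "coeff (p * q) k \<in> Ak k" for k
    unfolding coeff_mult p q
  proof (rule Ak_sum)
    fix i assume "i \<in> {..k}"
    then show "hc a i * hc b (k - i) \<in> Ak k" using Ak_mult[OF hc_in_Ak[of a i] hc_in_Ak[of b "k - i"]] by simp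
  qed
  then have "hc (a * b) = coeff (p * q)" by (rule hc_eq_coeff) (simp add: p q)
  then show ?thesis using p q by (simp add: coeff_mult)
qed

lemma hc_homogeneous:
  assumes "x \<in> Ak j"
  shows "hc x k = (if k = j then x else 0)"
proof -
  have "hc x = coeff (monom x j)"
    by (rule hc_eq_coeff) (use assms Ak_zero in \<open>auto simp: coeff_monom poly_monom\<close>)
  then show ?thesis by (simp add: coeff_monom)
qed

lemma hc_zero: "hc 0 k = 0"
  using hc_homogeneous[OF Ak_zero[of 0]] by simp

lemma hc_sum: "hc (sum f I) k = (\<Sum>i\<in>I. hc (f i) k)"
  by (induction I rule: infinite_finite_induct) (simp_all add: hc_zero hc_add)

definition init_deg :: "'a \<Rightarrow> nat" where
  "init_deg a = (LEAST k. hc a k \<noteq> 0)"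

lemma hc_init_deg:
  assumes "a \<noteq> 0"
  shows "hc a (init_deg a) \<noteq> 0"
proof -
  have "{k. hc a k \<noteq> 0} \<noteq> {}"
  proof
    assume "{k. hc a k \<noteq> 0} = {}"
    then have "a = 0" using hc_decomposition[of a] by (simp only: sum.empty)
    then show False using assms by simp
  qed
  then obtain k where "hc a k \<noteq> 0" by blast
  then show ?thesis unfolding init_deg_def by (rule LeastI)
qed

lemma hc_less_init_deg: "k < init_deg a \<Longrightarrow> hc a k = 0"
  unfolding init_deg_def using not_less_Least by blast

lemma init_degI: "hc a d \<noteq> 0 \<Longrightarrow> (\<And>k. k < d \<Longrightarrow> hc a k = 0) \<Longrightarrow> init_deg a = d"
  unfolding init_deg_def by (rule Least_equality) (auto simp: not_less[symmetric])

lemma initial_eq: "a \<noteq> 0 \<Longrightarrow> ini a = hc a (init_deg a)"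
  unfolding initial_def init_deg_def by simp

lemma initial_zero [simp]: "ini 0 = 0"
  unfolding initial_def by simp

lemma initial_nonzero: "a \<noteq> 0 \<Longrightarrow> ini a \<noteq> 0"
  using initial_eq hc_init_deg by simp

lemma initial_homogeneous:
  assumes "x \<in> Ak j" "x \<noteq> 0"
  shows "init_deg x = j" "ini x = x"
proof -
  show "init_deg x = j" by (rule init_degI) (use hc_homogeneous[OF assms(1)] assms(2) in auto)
  then show "ini x = x" using initial_eq[OF assms(2)] hc_homogeneous[OF assms(1)] by simp
qed

lemma initial_F: "c \<in> F \<Longrightarrow> ini c = c"
  by (cases "c = 0") (auto simp: initial_homogeneous)

lemma hc_mult_init_deg:
  assumes a: "a \<noteq> 0" and b: "b \<noteq> 0" and k: "k \<le> init_deg a + init_deg b"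
  shows "hc (a * b) k = (if k = init_deg a + init_deg b then ini a * ini b else 0)"
proof -
  let ?P = "k = init_deg a + init_deg b"
  have summand: "hc a i * hc b (k - i) = (if i = init_deg a \<and> ?P then ini a * ini b else 0)"
    if "i \<le> k" for i
  proof (cases "i < init_deg a")
    case True
    then show ?thesis using hc_less_init_deg[of i a] by simp
  next
    case False
    show ?thesis
    proof (cases "i = init_deg a \<and> ?P")
      case True
      then show ?thesis using initial_eq a b by simp
    next
      case not_top: False
      then have "k - i < init_deg b" using False k that by auto
      then show ?thesis using hc_less_init_deg[of "k - i" b] not_top by auto
    qed
  qed
  have "hc (a * b) k = (\<Sum>i\<le>k. if i = init_deg a \<and> ?P then ini a * ini b else 0)"
    unfolding hc_mult using summand by (intro sum.cong) auto
  also have "\<dots> = (if ?P then ini a * ini b else 0)"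
    by (cases ?P) simp_all
  finally show ?thesis .
qed

lemma initial_mult:
  assumes "a \<noteq> 0" "b \<noteq> 0"
  shows "init_deg (a * b) = init_deg a + init_deg b" "ini (a * b) = ini a * ini b"
proof -
  have "ini a * ini b \<noteq> 0" using initial_nonzero assms by simp
  then show deg: "init_deg (a * b) = init_deg a + init_deg b"
    using hc_mult_init_deg[OF assms] by (intro init_degI) simp_all
  show "ini (a * b) = ini a * ini b"
    using initial_eq[of "a * b"] assms hc_mult_init_deg[OF assms] by (simp add: deg)
qed

lemma initial_prod:
  "finite I \<Longrightarrow> (\<And>i. i \<in> I \<Longrightarrow> f i \<noteq> 0) \<Longrightarrow> ini (prod f I) = (\<Prod>i\<in>I. ini (f i))"
proof (induction I rule: finite_induct)
  case empty
  then show ?case using initial_F subring_one[OF is_subring_F] by simp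
next
  case (insert i I)
  then show ?case using initial_mult(2)[of "f i" "prod f I"] by simp
qed

lemma initial_power: "a \<noteq> 0 \<Longrightarrow> ini (a ^ n) = ini a ^ n"
  using initial_prod[of "{..<n}" "\<lambda>_. a"] by simp

lemma initial_monomial:
  assumes "finite S" "0 \<notin> S"
  shows "ini (monomial S e) = (\<Prod>s\<in>S. ini s ^ e s)"
proof -
  have "ini (monomial S e) = (\<Prod>s\<in>S. ini (s ^ e s))"
    unfolding monomial_def using assms by (intro initial_prod) auto
  also have "\<dots> = (\<Prod>s\<in>S. ini s ^ e s)"
    using assms(2) by (intro prod.cong refl initial_power) auto
  finally show ?thesis .
qed

text \<open>Take \<open>E0\<close> to be the summands of least initial degree \<open>d\<close>: the sum of their initial forms
  is the degree-\<open>d\<close> component of the whole sum.\<close>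

lemma sum_initial_lowest:
  assumes E: "finite E" "E \<noteq> {}" and nz: "\<And>e. e \<in> E \<Longrightarrow> t e \<noteq> 0" and sum: "(\<Sum>e\<in>E. t e) = 0"
  obtains E0 where "E0 \<subseteq> E" "E0 \<noteq> {}" "(\<Sum>e\<in>E0. ini (t e)) = 0"
proof -
  define d where "d = Min (init_deg ` t ` E)"
  define E0 where "E0 = {e \<in> E. init_deg (t e) = d}"
  have "d \<in> init_deg ` t ` E" unfolding d_def using E by (intro Min_in) auto
  then have "E0 \<noteq> {}" unfolding E0_def by auto
  have le: "d \<le> init_deg (t e)" if "e \<in> E" for e unfolding d_def using E that by auto
  have "0 = (\<Sum>e\<in>E. hc (t e) d)" using sum hc_sum[of t E d] hc_zero by simp
  also have "\<dots> = (\<Sum>e\<in>E. if init_deg (t e) = d then ini (t e) else 0)"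
    using le nz initial_eq hc_less_init_deg nat_less_le by (intro sum.cong) auto
  also have "\<dots> = (\<Sum>e\<in>E0. ini (t e))"
    unfolding E0_def by (rule sum.inter_filter[OF E(1), symmetric])
  finally show ?thesis using that[of E0] \<open>E0 \<noteq> {}\<close> unfolding E0_def by auto
qed

lemma monomials_indep_lift:
  assumes S: "finite S" "0 \<notin> S" "inj_on ini S"
    and C: "\<And>c. c \<in> C \<Longrightarrow> ini c \<in> C'" and indep: "monomials_indep C' (ini ` S)"
  shows "monomials_indep C S"
proof (rule monomials_indepI)
  fix E c e0
  assume E: "finite E" and supp: "\<And>e s. e \<in> E \<Longrightarrow> s \<notin> S \<Longrightarrow> e s = 0"
    and coeffs: "\<And>e. e \<in> E \<Longrightarrow> c e \<in> C" and rel: "(\<Sum>e\<in>E. c e * monomial S e) = 0"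
    and e0: "e0 \<in> E"
  show "c e0 = 0"
  proof (rule ccontr)
    assume "c e0 \<noteq> 0"
    define E' where "E' = {e \<in> E. c e \<noteq> 0}"
    have t: "c e * monomial S e \<noteq> 0"
      "ini (c e * monomial S e) = ini (c e) * (\<Prod>s\<in>S. ini s ^ e s)" if "e \<in> E'" for e
      using that initial_monomial[OF S(1,2)] initial_mult(2) monomial_nonzero[OF S(1,2)]
      unfolding E'_def by simp_all
    have E': "finite E'" "E' \<noteq> {}" using E e0 \<open>c e0 \<noteq> 0\<close> unfolding E'_def by auto
    have "(\<Sum>e\<in>E'. c e * monomial S e) = (\<Sum>e\<in>E. c e * monomial S e)"
      by (rule sum.mono_neutral_left[OF E]) (auto simp: E'_def)
    then have sum_E': "(\<Sum>e\<in>E'. c e * monomial S e) = 0" using rel by simp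
    obtain E0 where E0: "E0 \<subseteq> E'" "E0 \<noteq> {}" "(\<Sum>e\<in>E0. ini (c e * monomial S e)) = 0"
      by (rule sum_initial_lowest[OF E' t(1) sum_E'])
    then obtain e1 where e1: "e1 \<in> E0" by blast
    have fin: "finite E0" using E'(1) E0(1) finite_subset by auto
    have "(\<Sum>e\<in>E0. ini (c e * monomial S e)) = (\<Sum>e\<in>E0. ini (c e) * (\<Prod>s\<in>S. ini s ^ e s))"
      by (rule sum.cong) (use E0(1) t(2) in auto)
    with E0(3) have rel0: "(\<Sum>e\<in>E0. ini (c e) * (\<Prod>s\<in>S. ini s ^ e s)) = 0" by simp
    have "ini (c e1) = 0"
    proof (rule monomials_indep_image[OF S(3) indep fin _ _ rel0 e1])
      show "e s = 0" if "e \<in> E0" "s \<notin> S" for e s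
        using supp[of e s] that E0(1) unfolding E'_def by blast
      show "ini (c e) \<in> C'" if "e \<in> E0" for e
        using C[OF coeffs[of e]] that E0(1) unfolding E'_def by blast
    qed
    then show False using e1 E0(1) initial_nonzero unfolding E'_def by auto
  qed
qed

section \<open>Transcendence degree of the initial algebra\<close>

lemma exists_homogeneous_generators:
  obtains H where "finite H" "gen_alg F H = UNIV" "\<forall>h\<in>H. h \<noteq> 0 \<and> ini h = h"
proof -
  obtain G where G: "finite G" "gen_alg F G = UNIV" using finitely_generated by blast
  define H where "H = (\<Union>g\<in>G. hc g ` {k. hc g k \<noteq> 0})"
  note R = is_subring_gen_alg[OF subring_one[OF is_subring_F], of H]
  have "finite H" unfolding H_def using G(1) hc_decomposition by auto
  moreover have "\<forall>h\<in>H. h \<noteq> 0 \<and> ini h = h"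
    using initial_homogeneous[OF hc_in_Ak] unfolding H_def by auto
  moreover have "G \<subseteq> gen_alg F H"
  proof
    fix g assume "g \<in> G"
    have "g = (\<Sum>k\<in>{k. hc g k \<noteq> 0}. hc g k)" using hc_decomposition by blast
    also have "\<dots> \<in> gen_alg F H"
    proof (rule subring_sum[OF R])
      fix k assume "k \<in> {k. hc g k \<noteq> 0}"
      then have "hc g k \<in> H" using \<open>g \<in> G\<close> unfolding H_def by blast
      then show "hc g k \<in> gen_alg F H" by (rule gen_alg.base_G)
    qed
    finally show "g \<in> gen_alg F H" .
  qed
  then have "gen_alg F H = UNIV"
    using gen_alg_least[OF R, of F G] G(2) gen_alg.base_F[of _ F H] by blast
  ultimately show ?thesis using that by blast
qed

lemma monomials_indep_card_bounded:
  obtains N where "\<forall>U. finite U \<and> monomials_indep F U \<longrightarrow> card U \<le> N"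
proof -
  obtain H where H: "finite H" "gen_alg F H = UNIV" "\<forall>h\<in>H. h \<noteq> 0 \<and> ini h = h"
    by (rule exists_homogeneous_generators)
  obtain B where B: "B \<subseteq> H" "finite B" "{} \<inter> B = {}" "monomials_indep F ({} \<union> B)"
    "H \<subseteq> alg_closure F ({} \<union> B)"
    by (rule exists_maximal_indep_extension[OF is_subring_F finite.emptyI monomials_indep_empty,
          where X = H and N = "card H"])
      (rule card_mono[OF H(1)])
  then have "alg_closure F B = UNIV" using alg_closure_UNIV[OF is_subring_F H(2)] by simp
  then show ?thesis
    using that[of "card B"] card_le_if_subset_alg_closure[OF is_subring_F B(2)] by blast
qed

lemma exists_indep_lift:
  assumes Y: "finite Y" "Y \<subseteq> ini ` R" "monomials_indep F Y"
  obtains S where "finite S" "S \<subseteq> R" "monomials_indep F S" "card S = card Y"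
proof -
  have "\<forall>y\<in>Y. \<exists>r. r \<in> R \<and> ini r = y" using Y(2) by blast
  then have "\<exists>rep. \<forall>y\<in>Y. rep y \<in> R \<and> ini (rep y) = y" by (rule bchoice)
  then obtain rep where rep: "\<forall>y\<in>Y. rep y \<in> R \<and> ini (rep y) = y" ..
  define S where "S = rep ` Y"
  have inj_rep: "inj_on rep Y" by (rule inj_onI) (metis rep)
  have ini_S: "ini ` S = Y"
    unfolding S_def image_image using rep by (simp cong: image_cong)
  have inj_ini: "inj_on ini S" unfolding S_def using rep by (auto intro!: inj_onI)
  have "0 \<notin> Y" by (rule zero_notin_monomials_indep[OF Y(1,3) subring_one[OF is_subring_F]])
  then have "0 \<notin> S" unfolding S_def using rep by force
  have "monomials_indep F S"
  proof (rule monomials_indep_lift[OF _ \<open>0 \<notin> S\<close> inj_ini])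
    show "finite S" unfolding S_def using Y(1) by simp
    show "ini c \<in> F" if "c \<in> F" for c using that initial_F by simp
    show "monomials_indep F (ini ` S)" unfolding ini_S by (rule Y(3))
  qed
  moreover have "card S = card Y" unfolding S_def by (rule card_image[OF inj_rep])
  ultimately show ?thesis using that Y(1) rep unfolding S_def by blast
qed

text \<open>Extend \<open>Y\<close> by homogeneous generators \<open>Z\<close> to a transcendence basis \<open>Y \<union> Z\<close> of the whole
  ring. As \<open>Z\<close> is independent over the algebraic closure of \<open>F[Y]\<close>, which contains the initial
  forms of \<open>R\<close>, it stays independent over \<open>R\<close>; so \<open>S \<union> Z\<close> is independent.\<close>

lemma card_indep_subalgebra_le:
  assumes R: "is_subalgebra F R"
    and Y: "finite Y" "monomials_indep F Y" "ini ` R \<subseteq> alg_closure F Y"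
    and S: "finite S" "S \<subseteq> R" "monomials_indep F S"
  shows "card S \<le> card Y"
proof -
  have subring_R: "is_subring R" by (rule is_subring_subalgebra[OF is_subring_F R])
  obtain H where H: "finite H" "gen_alg F H = UNIV" "\<forall>h\<in>H. h \<noteq> 0 \<and> ini h = h"
    by (rule exists_homogeneous_generators)
  obtain Z where Z: "Z \<subseteq> H" "finite Z" "Y \<inter> Z = {}" "monomials_indep F (Y \<union> Z)"
    "H \<subseteq> alg_closure F (Y \<union> Z)"
    by (rule exists_maximal_indep_extension[OF is_subring_F Y(1,2), where X = H and N = "card H"])
      (rule card_mono[OF H(1)])
  have "monomials_indep (gen_alg F Y) Z"
    by (rule monomials_indep_gen_alg[OF is_subring_F Y(1) Z(2,3,4)])
  then have "monomials_indep (alg_closure F Y) Z"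
    unfolding alg_closure_def
    by (rule monomials_indep_algebraic_coeffs[OF is_subring_gen_alg[OF subring_one[OF is_subring_F]] Z(2)])
  moreover have ini_Z: "ini z = z" "z \<noteq> 0" if "z \<in> Z" for z using H(3) Z(1) that by auto
  then have "ini ` Z = Z" by force
  moreover have "inj_on ini Z" by (rule inj_onI) (simp add: ini_Z)
  ultimately have indep_RZ: "monomials_indep R Z"
    using monomials_indep_lift[OF Z(2) _ _ _, where C = R and C' = "alg_closure F Y"] Y(3) ini_Z(2)
    by auto
  have "S \<inter> Z = {}" using monomials_indep_disjoint[OF subring_R Z(2) indep_RZ] S(2) by blast
  moreover have "gen_alg F S \<subseteq> R"
    using R S(2) unfolding is_subalgebra_def by (intro gen_alg_least[OF subring_R]) auto
  ultimately have "monomials_indep F (S \<union> Z)"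
    by (intro monomials_indep_Un[OF S(1) Z(2) _ is_subring_F S(3) indep_RZ])
  moreover have "alg_closure F (Y \<union> Z) = UNIV" by (rule alg_closure_UNIV[OF is_subring_F H(2) Z(5)])
  ultimately have "card (S \<union> Z) \<le> card (Y \<union> Z)"
    using card_le_if_subset_alg_closure[OF is_subring_F] Y(1) Z(2) S(1) by simp
  then show ?thesis
    using card_Un_disjoint[OF S(1) Z(2) \<open>S \<inter> Z = {}\<close>] card_Un_disjoint[OF Y(1) Z(2,3)] by simp
qed

lemma exists_maximal_indep_initial_forms:
  obtains Y where "finite Y" "Y \<subseteq> ini ` R" "monomials_indep F Y" "ini ` R \<subseteq> alg_closure F Y"
proof -
  obtain N where N: "\<forall>U. finite U \<and> monomials_indep F U \<longrightarrow> card U \<le> N"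
    by (rule monomials_indep_card_bounded)
  obtain Y where "Y \<subseteq> ini ` R" "finite Y" "{} \<inter> Y = {}" "monomials_indep F ({} \<union> Y)"
    "ini ` R \<subseteq> alg_closure F ({} \<union> Y)"
    by (rule exists_maximal_indep_extension[OF is_subring_F finite.emptyI monomials_indep_empty,
          where X = "ini ` R" and N = N])
      (simp add: N)
  then show ?thesis using that by simp
qed

lemma trdeg_Fspan_initial_eq_card:
  assumes Y: "finite Y" "Y \<subseteq> ini ` R" "monomials_indep F Y" "ini ` R \<subseteq> alg_closure F Y"
  shows "trdeg F (Fspan F (ini ` R)) = card Y"
proof (rule trdeg_eq_card[OF Y(1)])
  show "Y \<subseteq> Fspan F (ini ` R)" using Y(2) mem_Fspan[OF subring_one[OF is_subring_F]] by blast
  show "alg_indep F Y" using Y(1,3) alg_indep_iff_monomials_indep by blast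
  have "Fspan F (ini ` R) \<subseteq> alg_closure F Y"
    using Y(4) gen_alg_subset_alg_closure[OF is_subring_F, of Y] gen_alg.base_F[of _ F Y]
    by (intro Fspan_subset[OF is_subring_alg_closure[OF is_subring_F]]) auto
  moreover fix S assume "finite S" "S \<subseteq> Fspan F (ini ` R)" "alg_indep F S"
  ultimately show "card S \<le> card Y"
    using card_le_if_subset_alg_closure[OF is_subring_F Y(1), of S]
      alg_indep_iff_monomials_indep[of S F]
    by blast
qed

lemma trdeg_subalgebra_eq_card:
  assumes R: "is_subalgebra F R"
    and Y: "finite Y" "Y \<subseteq> ini ` R" "monomials_indep F Y" "ini ` R \<subseteq> alg_closure F Y"
  shows "trdeg F R = card Y"
proof -
  obtain S0 where S0: "finite S0" "S0 \<subseteq> R" "monomials_indep F S0" "card S0 = card Y"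
    by (rule exists_indep_lift[OF Y(1,2,3)])
  show ?thesis
  proof (rule trdeg_eq_card[OF S0(1,2), unfolded S0(4)])
    show "alg_indep F S0" using S0(1,3) alg_indep_iff_monomials_indep by blast
    fix S assume "finite S" "S \<subseteq> R" "alg_indep F S"
    then show "card S \<le> card Y"
      using card_indep_subalgebra_le[OF R Y(1,3,4), of S] alg_indep_iff_monomials_indep[of S F]
      by blast
  qed
qed

theorem trdeg_Fspan_initial:
  assumes R: "is_subalgebra F R"
  shows "trdeg F (Fspan F (ini ` R)) = trdeg F R"
proof -
  obtain Y where Y: "finite Y" "Y \<subseteq> ini ` R" "monomials_indep F Y" "ini ` R \<subseteq> alg_closure F Y"
    by (rule exists_maximal_indep_initial_forms)
  show ?thesis
    using trdeg_Fspan_initial_eq_card[OF Y] trdeg_subalgebra_eq_card[OF R Y] by simp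
qed

end

theorem proposition1p5:
  fixes Ak :: "nat \<Rightarrow> 'a::idom set" and R :: "'a set"
  assumes "affine_graded_domain Ak"
    and "is_subalgebra (Ak 0) R"
  shows "trdeg (Ak 0) (Fspan (Ak 0) (initial Ak ` R)) = trdeg (Ak 0) R"
proof -
  interpret graded_domain Ak by (rule graded_domain.intro[OF assms(1)])
  show ?thesis by (rule trdeg_Fspan_initial[OF assms(2)])
qed

end
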